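(* Under the standing assumptions below, let $x_0\in\mathbb R$ be a Lebesgue point of both $p$ and $w$. Then $$\lim_{J\downarrow x_0}\lambda(J)\,\mathcal L(J)^2=\frac{\pi^2}{s(x_0)^2},$$ where the limit is taken over nonempty bounded open intervals $J$ with $x_0\in\overline J$ and $\mathcal L(J)\to0$, and $s(x_0)=\sqrt{w(x_0)/p(x_0)}$.
   Context: Standing assumptions: $1<\beta<\infty$; $q\in L^\infty(\mathbb R)$ with $0\le q\le\beta$ a.e.; $p,w\in L^\infty(\mathbb R)$ with $1/\beta\le p\le\beta$ and $1/\beta\le w\le\beta$ a.e.; $s:=\sqrt{w/p}$. For a nonempty bounded open interval $J$, $\lambda(J)=\min_{u\in H^1_0(J),u\ne0}\frac{\int_J p u'^2\,dx+\int_J q u^2\,dx}{\int_J w u^2\,dx}$. $\mathcal L$ denotes Lebesgue measure. *)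

theory Defs
  imports "HOL-Analysis.Analysis"
begin

definition lebesgue_point :: "(real \<Rightarrow> real) \<Rightarrow> real \<Rightarrow> bool" where
  "lebesgue_point f x0 \<longleftrightarrow>
     ((\<lambda>r. (1 / (2 * r)) * (LINT t:{x0 - r..x0 + r}|lebesgue. \<bar>f t - f x0\<bar>))
        \<longlongrightarrow> 0) (at_right 0)"

text \<open>H^1_0(a,b) in one dimension, via the (absolutely) continuous representative:
  pairs (u, g) where g is the weak derivative u', g \<in> L^2(a,b),
  u x = integral of g over [a,x] for x in [a,b] (so u a = 0), and u b = 0.\<close>
definition H10 :: "real \<Rightarrow> real \<Rightarrow> ((real \<Rightarrow> real) \<times> (real \<Rightarrow> real)) set" where
  "H10 a b = {(u, g). g \<in> borel_measurable lebesgue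
       \<and> set_integrable lebesgue {a<..<b} g
       \<and> set_integrable lebesgue {a<..<b} (\<lambda>x. (g x)\<^sup>2)
       \<and> (\<forall>x\<in>{a..b}. u x = (LINT t:{a..x}|lebesgue. g t))
       \<and> u b = 0}"

definition rayleigh ::
  "(real \<Rightarrow> real) \<Rightarrow> (real \<Rightarrow> real) \<Rightarrow> (real \<Rightarrow> real) \<Rightarrow> real \<Rightarrow> real
     \<Rightarrow> (real \<Rightarrow> real) \<Rightarrow> (real \<Rightarrow> real) \<Rightarrow> real" where
  "rayleigh p q w a b u g =
     ((LINT x:{a<..<b}|lebesgue. p x * (g x)\<^sup>2) + (LINT x:{a<..<b}|lebesgue. q x * (u x)\<^sup>2))
     / (LINT x:{a<..<b}|lebesgue. w x * (u x)\<^sup>2)"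

text \<open>The principal eigenvalue lambda(J) for J = (a,b): the minimum (= infimum,
  which is attained) of the Rayleigh quotient over nonzero u in H^1_0(J).
  Since u is continuous, u \<noteq> 0 in L^2 iff u does not vanish identically on (a,b).\<close>
definition lambdaJ ::
  "(real \<Rightarrow> real) \<Rightarrow> (real \<Rightarrow> real) \<Rightarrow> (real \<Rightarrow> real) \<Rightarrow> real \<Rightarrow> real \<Rightarrow> real" where
  "lambdaJ p q w a b =
     Inf {rayleigh p q w a b u g | u g. (u, g) \<in> H10 a b \<and> (\<exists>x\<in>{a<..<b}. u x \<noteq> 0)}"

end

theory Submission
  imports Defs
begin

text \<open>At a Lebesgue point \<open>x\<^sub>0\<close> the mean deviations of \<open>p\<close> from \<open>p\<^sub>0 = p x\<^sub>0\<close> and of \<open>w\<close> from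
  \<open>w\<^sub>0 = w x\<^sub>0\<close> over \<open>[a, b] \<ni> x\<^sub>0\<close> tend to \<open>0\<close>, so on short intervals the problem behaves like the one
  with constant coefficients \<open>p\<^sub>0, 0, w\<^sub>0\<close>, whose principal eigenvalue is \<open>p\<^sub>0 \<pi>\<^sup>2 / (w\<^sub>0 L\<^sup>2)\<close> with
  \<open>L = b - a\<close>.

  The upper bound comes from the test function \<open>sin (\<pi> (x - a) / L)\<close>: its Rayleigh quotient is
  \<open>p\<^sub>0 \<pi>\<^sup>2 / (w\<^sub>0 L\<^sup>2)\<close> up to errors governed by the mean deviations, and \<open>q\<close> only contributes \<open>O(1)\<close>.

  For the lower bound, completing the square with \<open>Z = p\<^sub>0 k cot (k (x - a\<^sub>0))\<close>, which solves
  \<open>Z' + Z\<^sup>2 / p\<^sub>0 = - p\<^sub>0 k\<^sup>2\<close> on the interval enlarged by the factor \<open>1 + 2 \<theta>\<close>, gives the Poincare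
  inequality \<open>\<integral> u\<^sup>2 \<le> (L (1 + 2 \<theta>) / \<pi>)\<^sup>2 / p\<^sub>0 \<integral> p u'\<^sup>2\<close> up to an error governed by the mean
  deviation of \<open>p\<close>.  Together with \<open>u\<^sup>2 \<le> L \<integral> u'\<^sup>2\<close> this bounds \<open>\<integral> w u\<^sup>2\<close> by
  \<open>(1 + 2 \<theta>)\<^sup>2 w\<^sub>0 L\<^sup>2 / (p\<^sub>0 \<pi>\<^sup>2) \<integral> p u'\<^sup>2\<close> asymptotically, and \<open>\<theta> \<longrightarrow> 0\<close> finishes the proof.\<close>

section \<open>Integration on compact intervals\<close>

lemma sigma_finite_lebesgue: "sigma_finite_measure (lebesgue :: 'a::euclidean_space measure)"
proof
  show "\<exists>A::'a set set. countable A \<and> A \<subseteq> sets lebesgue \<and> \<Union>A = space lebesgue \<and>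
      (\<forall>a\<in>A. emeasure lebesgue a \<noteq> \<infinity>)"
    by (intro exI[of _ "range (\<lambda>n::nat. box (- real n *\<^sub>R One) (real n *\<^sub>R One))"])
       (auto simp: emeasure_lborel_cbox_eq UN_box_eq_UNIV)
qed

interpretation lebesgue_pair: pair_sigma_finite "lebesgue :: real measure" "lebesgue :: real measure"
  by (intro pair_sigma_finite.intro sigma_finite_lebesgue)

text \<open>Lets the measurability prover handle order relations between coordinates of
  \<open>lebesgue \<Otimes>\<^sub>M lebesgue\<close>.\<close>

lemma borel_measurable_lebesgue_ident [measurable]: "(\<lambda>x::real. x) \<in> borel_measurable lebesgue"
  by (rule measurable_completion) simp

lemma integrable_triangle_product:
  fixes f g :: "real \<Rightarrow> real"
  assumes f: "integrable lebesgue f" and g: "integrable lebesgue g"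
  shows "integrable (lebesgue \<Otimes>\<^sub>M lebesgue) (\<lambda>(x, s). if s \<le> x then f x * g s else 0)"
    (is "integrable _ (case_prod ?h)")
proof (rule lebesgue_pair.Fubini_integrable)
  have [measurable]: "f \<in> borel_measurable lebesgue" "g \<in> borel_measurable lebesgue"
    using f g by auto
  show "case_prod ?h \<in> borel_measurable (lebesgue \<Otimes>\<^sub>M lebesgue)"
    by measurable
  have "integrable lebesgue (\<lambda>x. \<bar>f x\<bar> * (\<integral>s. \<bar>g s\<bar> \<partial>lebesgue))"
    using f by auto
  then show "integrable lebesgue (\<lambda>x. \<integral>s. norm (case_prod ?h (x, s)) \<partial>lebesgue)"
  proof (rule Bochner_Integration.integrable_bound)
    show "(\<lambda>x. \<integral>s. norm (case_prod ?h (x, s)) \<partial>lebesgue) \<in> borel_measurable lebesgue"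
      by measurable
    have "(\<integral>s. norm (case_prod ?h (x, s)) \<partial>lebesgue) \<le> (\<integral>s. \<bar>f x\<bar> * \<bar>g s\<bar> \<partial>lebesgue)" for x
      using g by (intro integral_mono_AE') (auto simp: abs_mult)
    then show "AE x in lebesgue.
        norm (\<integral>s. norm (case_prod ?h (x, s)) \<partial>lebesgue) \<le> norm (\<bar>f x\<bar> * (\<integral>s. \<bar>g s\<bar> \<partial>lebesgue))"
      by (auto intro!: integral_nonneg_AE)
  qed
  have "integrable lebesgue (\<lambda>s. f x * (g s * indicator {..x} s))" for x
    using g by (intro integrable_mult_right integrable_real_mult_indicator) auto
  then show "AE x in lebesgue. integrable lebesgue (\<lambda>s. case_prod ?h (x, s))"
    by (intro AE_I2, rule Bochner_Integration.integrable_cong[THEN iffD1, rotated -1])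
       (auto simp: indicator_def)
qed

lemma integral_triangle_swap:
  fixes f g :: "real \<Rightarrow> real"
  assumes "integrable lebesgue f" and "integrable lebesgue g"
  shows "(\<integral>x. f x * (\<integral>s. g s * indicator {..x} s \<partial>lebesgue) \<partial>lebesgue)
       = (\<integral>s. g s * (\<integral>x. f x * indicator {s..} x \<partial>lebesgue) \<partial>lebesgue)"
proof -
  define h where "h x s = (if s \<le> x then f x * g s else 0)" for x s
  have "(\<integral>x. f x * (\<integral>s. g s * indicator {..x} s \<partial>lebesgue) \<partial>lebesgue)
      = (\<integral>x. (\<integral>s. h x s \<partial>lebesgue) \<partial>lebesgue)"
    by (auto simp: h_def intro!: Bochner_Integration.integral_cong simp flip: integral_mult_right_zero)
  also have "\<dots> = (\<integral>s. (\<integral>x. h x s \<partial>lebesgue) \<partial>lebesgue)"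
    using lebesgue_pair.Fubini_integral[of h] integrable_triangle_product[OF assms]
    by (simp add: h_def[abs_def])
  also have "\<dots> = (\<integral>s. g s * (\<integral>x. f x * indicator {s..} x \<partial>lebesgue) \<partial>lebesgue)"
    by (auto simp: h_def intro!: Bochner_Integration.integral_cong simp flip: integral_mult_right_zero)
  finally show ?thesis .
qed

lemma set_integral_Icc_swap:
  fixes A B :: "real \<Rightarrow> real"
  assumes A: "set_integrable lebesgue {a..b} A" and B: "set_integrable lebesgue {a..b} B"
  shows "(LINT x:{a..b}|lebesgue. A x * (LINT s:{a..x}|lebesgue. B s))
       = (LINT s:{a..b}|lebesgue. B s * (LINT x:{s..b}|lebesgue. A x))"
proof -
  define A' where "A' = (\<lambda>x. indicator {a..b} x * A x)"
  define B' where "B' = (\<lambda>x. indicator {a..b} x * B x)"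
  have "integrable lebesgue A'" "integrable lebesgue B'"
    using A B by (simp_all add: A'_def B'_def set_integrable_def)
  note swap = integral_triangle_swap[OF this]
  have inner_B: "(LINT s:{a..x}|lebesgue. B s) = (\<integral>s. B' s * indicator {..x} s \<partial>lebesgue)"
    if "x \<le> b" for x
    unfolding set_lebesgue_integral_def B'_def using that
    by (intro Bochner_Integration.integral_cong) (auto simp: indicator_def)
  have inner_A: "(LINT x:{s..b}|lebesgue. A x) = (\<integral>x. A' x * indicator {s..} x \<partial>lebesgue)"
    if "a \<le> s" for s
    unfolding set_lebesgue_integral_def A'_def using that
    by (intro Bochner_Integration.integral_cong) (auto simp: indicator_def)
  have "(LINT x:{a..b}|lebesgue. A x * (LINT s:{a..x}|lebesgue. B s))
      = (\<integral>x. A' x * (\<integral>s. B' s * indicator {..x} s \<partial>lebesgue) \<partial>lebesgue)"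
    unfolding set_lebesgue_integral_def[of _ "{a..b}"]
    by (intro Bochner_Integration.integral_cong) (auto simp: A'_def inner_B split: split_indicator)
  also have "\<dots> = (\<integral>s. B' s * (\<integral>x. A' x * indicator {s..} x \<partial>lebesgue) \<partial>lebesgue)"
    by (rule swap)
  also have "\<dots> = (LINT s:{a..b}|lebesgue. B s * (LINT x:{s..b}|lebesgue. A x))"
    unfolding set_lebesgue_integral_def[of _ "{a..b}"]
    by (intro Bochner_Integration.integral_cong) (auto simp: B'_def inner_A split: split_indicator)
  finally show ?thesis .
qed

lemma set_integral_Icc_split:
  fixes f :: "real \<Rightarrow> real"
  assumes "set_integrable lebesgue {a..b} f" "a \<le> c" "c \<le> b"
  shows "(LINT x:{a..b}|lebesgue. f x) = (LINT x:{a..c}|lebesgue. f x) + (LINT x:{c..b}|lebesgue. f x)"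
proof -
  have "f integrable_on {a..b}"
    using set_lebesgue_integral_eq_integral(1)[OF assms(1)] .
  moreover have "set_integrable lebesgue {a..c} f" "set_integrable lebesgue {c..b} f"
    using assms by (auto intro: set_integrable_subset)
  ultimately show ?thesis
    using assms
    by (simp add: set_lebesgue_integral_eq_integral
        Henstock_Kurzweil_Integration.integral_combine[OF _ _ \<open>f integrable_on {a..b}\<close>, symmetric])
qed

lemma set_integrable_continuous_mult:
  fixes f h :: "real \<Rightarrow> real"
  assumes "set_integrable lebesgue {a..b} f" "continuous_on {a..b} h"
  shows "set_integrable lebesgue {a..b} (\<lambda>x. h x * f x)"
proof (rule absolutely_integrable_bounded_measurable_product_real)
  show "h \<in> borel_measurable (lebesgue_on {a..b})"
    by (rule continuous_imp_measurable_on_sets_lebesgue[OF assms(2)]) auto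
  show "bounded (h ` {a..b})"
    by (intro compact_imp_bounded compact_continuous_image assms) auto
qed (use assms in auto)

lemma set_integrable_bounded_mult:
  fixes f h :: "real \<Rightarrow> real"
  assumes h: "set_integrable lebesgue A h" and f: "f \<in> borel_measurable lebesgue"
    and bound: "AE x in lebesgue. \<bar>f x\<bar> \<le> C"
  shows "set_integrable lebesgue A (\<lambda>x. f x * h x)"
  unfolding set_integrable_def
proof (rule Bochner_Integration.integrable_bound)
  show "integrable lebesgue (\<lambda>x. C * (indicator A x *\<^sub>R h x))"
    using h unfolding set_integrable_def by auto
  have "(\<lambda>x. indicator A x *\<^sub>R h x) \<in> borel_measurable lebesgue"
    using h unfolding set_integrable_def by auto
  then show "(\<lambda>x. indicator A x *\<^sub>R (f x * h x)) \<in> borel_measurable lebesgue"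
    using f by (auto simp: mult.left_commute)
  show "AE x in lebesgue. norm (indicator A x *\<^sub>R (f x * h x)) \<le> norm (C * (indicator A x *\<^sub>R h x))"
    using bound
  proof eventually_elim
    case (elim x)
    then have "\<bar>f x\<bar> * \<bar>h x\<bar> \<le> C * \<bar>h x\<bar>" "0 \<le> C"
      by (auto intro: mult_right_mono)
    then show ?case by (auto simp: indicator_def abs_mult)
  qed
qed

lemma continuous_on_indefinite_set_integral:
  fixes f :: "real \<Rightarrow> real"
  assumes "set_integrable lebesgue {a..b} f"
  shows "continuous_on {a..b} (\<lambda>x. LINT s:{a..x}|lebesgue. f s)"
proof -
  have "integrable (lebesgue_on {a..b}) f"
    using assms by (simp add: integrable_restrict_space set_integrable_def)
  from indefinite_integral_continuous_real[OF this] show ?thesis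
    by (simp add: integral_restrict_space set_lebesgue_integral_def)
qed

lemma set_integral_FTC_Icc:
  fixes F F' :: "real \<Rightarrow> real"
  assumes "a \<le> b" "\<And>x. x \<in> {a..b} \<Longrightarrow> (F has_real_derivative F' x) (at x within {a..b})"
    and "continuous_on {a..b} F'"
  shows "(LINT x:{a..b}|lebesgue. F' x) = F b - F a"
proof -
  have "(F' has_integral (F b - F a)) {a..b}"
    using assms by (intro fundamental_theorem_of_calculus)
                   (auto simp: has_real_derivative_iff_has_vector_derivative)
  then show ?thesis
    using set_lebesgue_integral_eq_integral(2)[OF absolutely_integrable_continuous_real[OF assms(3)]]
    by (simp add: integral_unique)
qed

text \<open>A single application of Fubini's theorem on the triangle \<open>s \<le> x\<close>.\<close>

lemma set_integral_indefinite_product: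
  fixes G H :: "real \<Rightarrow> real"
  assumes G: "set_integrable lebesgue {a..b} G" and H: "set_integrable lebesgue {a..b} H"
  defines "U x \<equiv> LINT s:{a..x}|lebesgue. G s" and "V x \<equiv> LINT s:{a..x}|lebesgue. H s"
  shows "U b * V b = (LINT x:{a..b}|lebesgue. U x * H x + V x * G x)"
proof -
  have "continuous_on {a..b} U" "continuous_on {a..b} V"
    unfolding U_def V_def by (intro continuous_on_indefinite_set_integral G H)+
  then have UH: "set_integrable lebesgue {a..b} (\<lambda>x. U x * H x)"
    and VG: "set_integrable lebesgue {a..b} (\<lambda>x. V x * G x)"
    using G H by (auto intro: set_integrable_continuous_mult)
  have "(LINT x:{a..b}|lebesgue. U x * H x) = (LINT s:{a..b}|lebesgue. G s * (LINT x:{s..b}|lebesgue. H x))"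
    unfolding U_def using set_integral_Icc_swap[OF H G] by (simp add: mult.commute)
  also have "\<dots> = (LINT s:{a..b}|lebesgue. V b * G s - V s * G s)"
    using set_integral_Icc_split[OF H]
    by (intro set_lebesgue_integral_cong) (auto simp: V_def algebra_simps)
  also have "\<dots> = V b * U b - (LINT s:{a..b}|lebesgue. V s * G s)"
    using G VG by (simp add: set_integral_diff set_integrable_mult_right U_def)
  finally show ?thesis
    unfolding set_integral_add(2)[OF UH VG] by simp
qed

lemma set_integral_product_rule:
  fixes U V G H :: "real \<Rightarrow> real"
  assumes "a \<le> b" and G: "set_integrable lebesgue {a..b} G" and H: "set_integrable lebesgue {a..b} H"
    and U: "\<And>x. x \<in> {a..b} \<Longrightarrow> U x = U a + (LINT s:{a..x}|lebesgue. G s)"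
    and V: "\<And>x. x \<in> {a..b} \<Longrightarrow> V x = V a + (LINT s:{a..x}|lebesgue. H s)"
  shows "U b * V b - U a * V a = (LINT x:{a..b}|lebesgue. U x * H x + V x * G x)"
proof -
  define U0 where "U0 x = (LINT s:{a..x}|lebesgue. G s)" for x
  define V0 where "V0 x = (LINT s:{a..x}|lebesgue. H s)" for x
  have U0H: "set_integrable lebesgue {a..b} (\<lambda>x. U0 x * H x)"
    and V0G: "set_integrable lebesgue {a..b} (\<lambda>x. V0 x * G x)"
    unfolding U0_def V0_def using G H
    by (auto intro: set_integrable_continuous_mult continuous_on_indefinite_set_integral)
  have "(LINT x:{a..b}|lebesgue. U x * H x + V x * G x)
      = (LINT x:{a..b}|lebesgue. (U a * H x + V a * G x) + (U0 x * H x + V0 x * G x))"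
  proof (rule set_lebesgue_integral_cong)
    show "\<forall>x. x \<in> {a..b} \<longrightarrow>
        U x * H x + V x * G x = (U a * H x + V a * G x) + (U0 x * H x + V0 x * G x)"
    proof (intro allI impI)
      fix x assume x: "x \<in> {a..b}"
      have "U x = U a + U0 x" "V x = V a + V0 x"
        using U[OF x] V[OF x] by (simp_all only: U0_def V0_def)
      then show "U x * H x + V x * G x = (U a * H x + V a * G x) + (U0 x * H x + V0 x * G x)"
        by (simp add: algebra_simps)
    qed
  qed simp
  also have "\<dots> = U a * V0 b + V a * U0 b + U0 b * V0 b"
    using G H U0H V0G set_integral_indefinite_product[OF G H]
    by (simp add: set_integral_add set_integrable_mult_right U0_def V0_def)
  also have "\<dots> = U b * V b - U a * V a"
  proof -
    have "U b = U a + U0 b" "V b = V a + V0 b"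
      using \<open>a \<le> b\<close> by (simp_all add: U0_def V0_def U[of b] V[of b])
    then show ?thesis
      by (simp add: algebra_simps)
  qed
  finally show ?thesis ..
qed

lemma set_integrable_Ioo_Icc_iff:
  fixes f :: "real \<Rightarrow> real"
  shows "set_integrable lebesgue {a<..<b} f \<longleftrightarrow> set_integrable lebesgue {a..b} f"
  by (rule set_integrable_discrete_difference[where X="{a,b}"]) auto

lemma set_integral_Ioo_Icc:
  fixes f :: "real \<Rightarrow> real"
  shows "(LINT x:{a<..<b}|lebesgue. f x) = (LINT x:{a..b}|lebesgue. f x)"
  by (rule set_integral_discrete_difference[where X="{a,b}"]) auto

lemma set_integral_singleton [simp]:
  fixes f :: "real \<Rightarrow> real"
  shows "(LINT x:{a}|lebesgue. f x) = 0"
  by (subst set_integral_discrete_difference[where X="{a}" and B="{}"])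
     (auto simp: set_lebesgue_integral_def)

lemma set_integral_nonneg_pointwise:
  fixes f :: "'a \<Rightarrow> real"
  assumes "\<And>x. x \<in> A \<Longrightarrow> 0 \<le> f x"
  shows "0 \<le> (LINT x:A|M. f x)"
  unfolding set_lebesgue_integral_def
  by (rule integral_nonneg_AE) (use assms in \<open>auto simp: indicator_def\<close>)

lemma set_integral_mult_square_nonneg:
  fixes f h :: "real \<Rightarrow> real"
  assumes "AE x in lebesgue. 0 \<le> f x"
  shows "0 \<le> (LINT x:A|lebesgue. f x * (h x)\<^sup>2)"
  unfolding set_lebesgue_integral_def
  by (rule integral_nonneg_AE) (use assms in \<open>auto elim!: eventually_mono simp: indicator_def\<close>)

lemma set_integral_pos_continuous:
  fixes f :: "real \<Rightarrow> real"
  assumes "continuous_on {a..b} f" "\<And>x. x \<in> {a..b} \<Longrightarrow> 0 \<le> f x"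
    and "x \<in> {a<..<b}" "f x \<noteq> 0"
  shows "0 < (LINT x:{a..b}|lebesgue. f x)"
proof -
  have "0 \<le> (LINT x:{a..b}|lebesgue. f x)"
    using assms(2) by (rule set_integral_nonneg_pointwise)
  moreover have "(LINT x:{a..b}|lebesgue. f x) \<noteq> 0"
  proof
    assume "(LINT x:{a..b}|lebesgue. f x) = 0"
    then have "(f has_integral 0) (cbox a b)"
      using set_lebesgue_integral_eq_integral[OF absolutely_integrable_continuous_real[OF assms(1)]]
      by (metis box_real(2) has_integral_integral)
    then have "f x = 0"
      using assms by (intro has_integral_0_cbox_imp_0[of a b f x]) auto
    with assms(4) show False ..
  qed
  ultimately show ?thesis
    by simp
qed

lemma set_integral_Icc_square_le:
  fixes G :: "real \<Rightarrow> real"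
  assumes "c \<le> d" and G: "set_integrable lebesgue {c..d} G"
    and G2: "set_integrable lebesgue {c..d} (\<lambda>x. (G x)\<^sup>2)"
  shows "(LINT x:{c..d}|lebesgue. G x)\<^sup>2 \<le> (d - c) * (LINT x:{c..d}|lebesgue. (G x)\<^sup>2)"
proof (cases "c = d")
  case True
  then show ?thesis
    by simp
next
  case False
  with \<open>c \<le> d\<close> have "0 < d - c" by simp
  define m where "m = (LINT x:{c..d}|lebesgue. G x) / (d - c)"
  have const: "set_integrable lebesgue {c..d} (\<lambda>x. k)" for k :: real
    by (rule absolutely_integrable_continuous_real) simp
  have "0 \<le> (LINT x:{c..d}|lebesgue. (G x - m)\<^sup>2)"
    by (rule set_integral_nonneg_pointwise) simp
  also have "\<dots> = (LINT x:{c..d}|lebesgue. (G x)\<^sup>2 - (2 * m * G x - m\<^sup>2))"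
    by (simp add: power2_eq_square algebra_simps)
  also have "\<dots> = (LINT x:{c..d}|lebesgue. (G x)\<^sup>2)
      - (2 * m * (LINT x:{c..d}|lebesgue. G x) - (d - c) * m\<^sup>2)"
    using G G2 const \<open>c \<le> d\<close>
    by (simp add: set_integral_diff set_integrable_mult_right set_integral_const)
  also have "2 * m * (LINT x:{c..d}|lebesgue. G x) - (d - c) * m\<^sup>2
      = (LINT x:{c..d}|lebesgue. G x)\<^sup>2 / (d - c)"
  proof -
    have "2 * (I / L) * I - L * (I / L)\<^sup>2 = I\<^sup>2 / L" if "L \<noteq> 0" for I L :: real
      using that by (simp add: field_simps power2_eq_square)
    then show ?thesis
      using \<open>0 < d - c\<close> unfolding m_def by simp
  qed
  finally have "(LINT x:{c..d}|lebesgue. G x)\<^sup>2 / (d - c) \<le> (LINT x:{c..d}|lebesgue. (G x)\<^sup>2)"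
    by simp
  then show ?thesis
    using \<open>0 < d - c\<close> by (simp add: pos_divide_le_eq mult.commute)
qed

lemma set_integrable_abs_diff_const:
  fixes f :: "real \<Rightarrow> real"
  assumes "set_integrable lebesgue {a..b} f"
  shows "set_integrable lebesgue {a..b} (\<lambda>x. \<bar>f x - c\<bar>)"
  using assms absolutely_integrable_continuous_real[of a b "\<lambda>_. c"]
  by (intro set_integrable_abs set_integral_diff(1)) auto

lemma set_integral_weighted_deviation:
  fixes f h :: "real \<Rightarrow> real"
  assumes fh: "set_integrable lebesgue {a..b} (\<lambda>x. f x * h x)" and h: "set_integrable lebesgue {a..b} h"
    and f: "set_integrable lebesgue {a..b} (\<lambda>x. \<bar>f x - c\<bar>)"
    and h_bounds: "\<And>x. x \<in> {a..b} \<Longrightarrow> 0 \<le> h x \<and> h x \<le> H"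
  shows "\<bar>(LINT x:{a..b}|lebesgue. f x * h x) - c * (LINT x:{a..b}|lebesgue. h x)\<bar>
           \<le> H * (LINT x:{a..b}|lebesgue. \<bar>f x - c\<bar>)"
proof -
  have dev: "\<bar>f x * h x - c * h x\<bar> \<le> H * \<bar>f x - c\<bar>" if "x \<in> {a..b}" for x
  proof -
    have "\<bar>f x * h x - c * h x\<bar> = \<bar>f x - c\<bar> * h x"
      using h_bounds[OF that] by (simp add: abs_mult flip: left_diff_distrib)
    also have "\<dots> \<le> \<bar>f x - c\<bar> * H"
      using h_bounds[OF that] by (intro mult_left_mono) auto
    finally show ?thesis
      by (simp add: mult.commute)
  qed
  have int_upper: "set_integrable lebesgue {a..b} (\<lambda>x. c * h x + H * \<bar>f x - c\<bar>)"
    and int_lower: "set_integrable lebesgue {a..b} (\<lambda>x. c * h x - H * \<bar>f x - c\<bar>)"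
    using h f by (auto intro: set_integral_add set_integral_diff set_integrable_mult_right)
  have "(LINT x:{a..b}|lebesgue. f x * h x) \<le> (LINT x:{a..b}|lebesgue. c * h x + H * \<bar>f x - c\<bar>)"
    using dev[unfolded abs_le_iff] by (intro set_integral_mono[OF fh int_upper]) (simp add: algebra_simps)
  moreover have "(LINT x:{a..b}|lebesgue. c * h x - H * \<bar>f x - c\<bar>) \<le> (LINT x:{a..b}|lebesgue. f x * h x)"
    using dev[unfolded abs_le_iff] by (intro set_integral_mono[OF int_lower fh]) (simp add: algebra_simps)
  ultimately show ?thesis
    using h f by (simp add: set_integral_add set_integral_diff set_integrable_mult_right abs_le_iff)
qed

section \<open>The space \<open>H\<^sub>0\<^sup>1\<close> and test functions\<close>

lemma H10D:
  assumes "(u, g) \<in> H10 a b"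
  shows "g \<in> borel_measurable lebesgue" "set_integrable lebesgue {a..b} g"
    "set_integrable lebesgue {a..b} (\<lambda>x. (g x)\<^sup>2)"
    "\<And>x. x \<in> {a..b} \<Longrightarrow> u x = (LINT t:{a..x}|lebesgue. g t)" "u b = 0"
  using assms unfolding H10_def by (auto simp: set_integrable_Ioo_Icc_iff)

lemma H10_left_zero:
  assumes "(u, g) \<in> H10 a b" "a \<le> b"
  shows "u a = 0"
  using H10D(4)[OF assms(1), of a] assms(2) by simp

lemma H10_continuous_on:
  assumes "(u, g) \<in> H10 a b"
  shows "continuous_on {a..b} u"
  using continuous_on_indefinite_set_integral[OF H10D(2)[OF assms]]
  by (rule continuous_on_eq) (use H10D(4)[OF assms] in auto)

lemma H10_square_le:
  assumes ug: "(u, g) \<in> H10 a b" and x: "x \<in> {a..b}"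
  shows "(u x)\<^sup>2 \<le> (b - a) * (LINT t:{a..b}|lebesgue. (g t)\<^sup>2)"
proof -
  note g = H10D(2,3)[OF ug]
  have "(u x)\<^sup>2 \<le> (x - a) * (LINT t:{a..x}|lebesgue. (g t)\<^sup>2)"
    using x g H10D(4)[OF ug x]
    by (auto intro!: set_integral_Icc_square_le intro: set_integrable_subset)
  also have "\<dots> \<le> (b - a) * (LINT t:{a..b}|lebesgue. (g t)\<^sup>2)"
  proof (rule mult_mono)
    show "(LINT t:{a..x}|lebesgue. (g t)\<^sup>2) \<le> (LINT t:{a..b}|lebesgue. (g t)\<^sup>2)"
      using set_integral_Icc_split[OF g(2), of x] x
            set_integral_nonneg_pointwise[of "{x..b}" "\<lambda>t. (g t)\<^sup>2" lebesgue]
      by simp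
  qed (use x in \<open>auto intro: set_integral_nonneg_pointwise\<close>)
  finally show ?thesis .
qed

text \<open>Apply the product rule first to \<open>u\<^sup>2\<close> and then to \<open>Z u\<^sup>2\<close>, which vanishes at both ends.\<close>

lemma H10_integral_deriv_mult_square:
  fixes Z Z' :: "real \<Rightarrow> real"
  assumes ug: "(u, g) \<in> H10 a b" and "a \<le> b"
    and Z: "\<And>x. x \<in> {a..b} \<Longrightarrow> (Z has_real_derivative Z' x) (at x within {a..b})"
    and Z': "continuous_on {a..b} Z'"
  shows "(LINT x:{a..b}|lebesgue. Z' x * (u x)\<^sup>2) = - 2 * (LINT x:{a..b}|lebesgue. Z x * u x * g x)"
proof -
  note g = H10D(2)[OF ug] and u = H10D(4)[OF ug]
  have ua: "u a = 0"
    by (rule H10_left_zero[OF ug \<open>a \<le> b\<close>])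
  have uc: "continuous_on {a..b} u"
    by (rule H10_continuous_on[OF ug])
  have Zc: "continuous_on {a..b} Z"
    using Z by (rule DERIV_continuous_on)
  have ug_int: "set_integrable lebesgue {a..b} (\<lambda>x. 2 * (u x * g x))"
    using set_integrable_continuous_mult[OF g uc] by (rule set_integrable_mult_right)
  have square: "(u x)\<^sup>2 = (u a)\<^sup>2 + (LINT s:{a..x}|lebesgue. 2 * (u s * g s))" if x: "x \<in> {a..b}" for x
  proof -
    have "u x * u x - u a * u a = (LINT s:{a..x}|lebesgue. u s * g s + u s * g s)"
      using x g u ua by (intro set_integral_product_rule) (auto intro: set_integrable_subset)
    then show ?thesis
      by (simp add: power2_eq_square ua mult.commute)
  qed
  have Z_eq: "Z x = Z a + (LINT s:{a..x}|lebesgue. Z' s)" if "x \<in> {a..b}" for x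
    using that Z Z'
    by (subst set_integral_FTC_Icc[where F=Z])
       (auto intro!: DERIV_subset[OF Z] continuous_on_subset[OF Z'])
  have "Z b * (u b)\<^sup>2 - Z a * (u a)\<^sup>2
      = (LINT x:{a..b}|lebesgue. Z x * (2 * (u x * g x)) + (u x)\<^sup>2 * Z' x)"
    using set_integral_product_rule[where U=Z and V="\<lambda>x. (u x)\<^sup>2", OF \<open>a \<le> b\<close>
        absolutely_integrable_continuous_real[OF Z'] ug_int Z_eq square]
    by simp
  also have "\<dots> = (LINT x:{a..b}|lebesgue. Z x * (2 * (u x * g x)))
      + (LINT x:{a..b}|lebesgue. Z' x * (u x)\<^sup>2)"
    using set_integrable_continuous_mult[OF ug_int Zc]
      absolutely_integrable_continuous_real[of a b "\<lambda>x. Z' x * (u x)\<^sup>2"] Z' uc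
    by (simp add: set_integral_add continuous_intros mult.commute)
  also have "(LINT x:{a..b}|lebesgue. Z x * (2 * (u x * g x)))
      = 2 * (LINT x:{a..b}|lebesgue. Z x * u x * g x)"
    by (simp add: mult_ac flip: set_integral_mult_right)
  finally show ?thesis
    using H10D(5)[OF ug] ua by simp
qed

lemma H10_sin:
  fixes a b :: real
  assumes "a < b"
  defines "k \<equiv> pi / (b - a)"
  shows "((\<lambda>x. sin (k * (x - a))), (\<lambda>x. k * cos (k * (x - a)))) \<in> H10 a b"
proof -
  have "(\<lambda>x. k * cos (k * (x - a))) \<in> borel_measurable lebesgue"
    by measurable
  moreover have "set_integrable lebesgue {a<..<b} (\<lambda>x. k * cos (k * (x - a)))"
    "set_integrable lebesgue {a<..<b} (\<lambda>x. (k * cos (k * (x - a)))\<^sup>2)"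
    unfolding set_integrable_Ioo_Icc_iff
    by (intro absolutely_integrable_continuous_real continuous_intros)+
  moreover have "sin (k * (x - a)) = (LINT t:{a..x}|lebesgue. k * cos (k * (t - a)))" if "x \<in> {a..b}" for x
    using that
    by (subst set_integral_FTC_Icc[where F="\<lambda>x. sin (k * (x - a))"])
       (auto intro!: derivative_eq_intros continuous_intros)
  moreover have "sin (k * (b - a)) = 0"
    using \<open>a < b\<close> by (simp add: k_def)
  ultimately show ?thesis
    unfolding H10_def by blast
qed

lemma sin_test_function_midpoint:
  fixes a b :: real
  assumes "a < b"
  shows "sin (pi / (b - a) * ((a + b) / 2 - a)) = 1"
proof -
  have "pi / (b - a) * ((a + b) / 2 - a) = pi / 2"
    using assms by (simp add: field_simps)
  then show ?thesis
    by simp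
qed

lemma set_integral_sin_cos_square:
  fixes a b k :: real
  assumes "a \<le> b" and "k \<noteq> 0" and "sin (2 * k * (b - a)) = 0"
  shows "(LINT x:{a..b}|lebesgue. (cos (k * (x - a)))\<^sup>2) = (b - a) / 2"
    and "(LINT x:{a..b}|lebesgue. (sin (k * (x - a)))\<^sup>2) = (b - a) / 2"
proof -
  define F where "F x = (x - a) / 2 + sin (2 * k * (x - a)) / (4 * k)" for x
  define G where "G x = (x - a) / 2 - sin (2 * k * (x - a)) / (4 * k)" for x
  have cos2: "cos (2 * k * (x - a)) = 2 * (cos (k * (x - a)))\<^sup>2 - 1"
    and sin2: "cos (2 * k * (x - a)) = 1 - 2 * (sin (k * (x - a)))\<^sup>2" for x
    using cos_double_cos[of "k * (x - a)"] cos_double_sin[of "k * (x - a)"] by (simp_all add: mult.assoc)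
  have "(F has_real_derivative (cos (k * (x - a)))\<^sup>2) (at x within {a..b})" for x
  proof -
    have "(F has_real_derivative 1 / 2 + cos (2 * k * (x - a)) * (2 * k * 1) / (4 * k)) (at x within {a..b})"
      unfolding F_def by (auto intro!: derivative_eq_intros)
    also have "1 / 2 + cos (2 * k * (x - a)) * (2 * k * 1) / (4 * k) = (cos (k * (x - a)))\<^sup>2"
      unfolding cos2 using \<open>k \<noteq> 0\<close> by (simp add: field_simps)
    finally show ?thesis .
  qed
  from set_integral_FTC_Icc[OF \<open>a \<le> b\<close> this] assms(3)
  show "(LINT x:{a..b}|lebesgue. (cos (k * (x - a)))\<^sup>2) = (b - a) / 2"
    by (simp add: F_def continuous_intros)
  have "(G has_real_derivative (sin (k * (x - a)))\<^sup>2) (at x within {a..b})" for x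
  proof -
    have "(G has_real_derivative 1 / 2 - cos (2 * k * (x - a)) * (2 * k * 1) / (4 * k)) (at x within {a..b})"
      unfolding G_def by (auto intro!: derivative_eq_intros)
    also have "1 / 2 - cos (2 * k * (x - a)) * (2 * k * 1) / (4 * k) = (sin (k * (x - a)))\<^sup>2"
      unfolding sin2 using \<open>k \<noteq> 0\<close> by (simp add: field_simps)
    finally show ?thesis .
  qed
  from set_integral_FTC_Icc[OF \<open>a \<le> b\<close> this] assms(3)
  show "(LINT x:{a..b}|lebesgue. (sin (k * (x - a)))\<^sup>2) = (b - a) / 2"
    by (simp add: G_def continuous_intros)
qed

lemma set_integral_sin_test_function:
  fixes a b :: real
  assumes "a < b"
  defines "k \<equiv> pi / (b - a)"
  shows "(LINT x:{a..b}|lebesgue. (sin (k * (x - a)))\<^sup>2) = (b - a) / 2"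
    and "(LINT x:{a..b}|lebesgue. (k * cos (k * (x - a)))\<^sup>2) = k\<^sup>2 * ((b - a) / 2)"
proof -
  have "k \<noteq> 0" "sin (2 * k * (b - a)) = 0"
    using assms by (simp_all add: k_def)
  note sin_cos_square = set_integral_sin_cos_square[OF less_imp_le[OF \<open>a < b\<close>] this]
  show "(LINT x:{a..b}|lebesgue. (sin (k * (x - a)))\<^sup>2) = (b - a) / 2"
    by (rule sin_cos_square(2))
  show "(LINT x:{a..b}|lebesgue. (k * cos (k * (x - a)))\<^sup>2) = k\<^sup>2 * ((b - a) / 2)"
    using sin_cos_square(1) by (simp add: power_mult_distrib)
qed

lemma rayleigh_Icc:
  "rayleigh p q w a b u g =
     ((LINT x:{a..b}|lebesgue. p x * (g x)\<^sup>2) + (LINT x:{a..b}|lebesgue. q x * (u x)\<^sup>2))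
       / (LINT x:{a..b}|lebesgue. w x * (u x)\<^sup>2)"
  unfolding rayleigh_def by (simp add: set_integral_Ioo_Icc)

lemma le_lambdaJ:
  assumes "a < b"
    and "\<And>u g. (u, g) \<in> H10 a b \<Longrightarrow> \<exists>x\<in>{a<..<b}. u x \<noteq> 0 \<Longrightarrow> c \<le> rayleigh p q w a b u g"
  shows "c \<le> lambdaJ p q w a b"
  unfolding lambdaJ_def
proof (rule cInf_greatest)
  have "(a + b) / 2 \<in> {a<..<b}"
    using \<open>a < b\<close> by simp
  with H10_sin[OF \<open>a < b\<close>] sin_test_function_midpoint[OF \<open>a < b\<close>] show
    "{rayleigh p q w a b u g |u g. (u, g) \<in> H10 a b \<and> (\<exists>x\<in>{a<..<b}. u x \<noteq> 0)} \<noteq> {}"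
    by (smt (verit) empty_iff mem_Collect_eq)
qed (use assms in auto)

section \<open>Mean deviation and Lebesgue points\<close>

definition mean_dev :: "(real \<Rightarrow> real) \<Rightarrow> real \<Rightarrow> real \<Rightarrow> real \<Rightarrow> real" where
  "mean_dev f c a b = (LINT x:{a..b}|lebesgue. \<bar>f x - c\<bar>) / (b - a)"

lemma mean_dev_nonneg: "a \<le> b \<Longrightarrow> 0 \<le> mean_dev f c a b"
  unfolding mean_dev_def by (intro divide_nonneg_nonneg set_integral_nonneg_pointwise) auto

lemma set_integral_abs_diff_eq_mean_dev:
  "a < b \<Longrightarrow> (LINT x:{a..b}|lebesgue. \<bar>f x - c\<bar>) = (b - a) * mean_dev f c a b"
  by (simp add: mean_dev_def)

text \<open>Intervals \<open>[a, b] \<ni> x\<^sub>0\<close> are encoded by their endpoints \<open>(a, b)\<close>.\<close>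

definition intervals_at :: "real \<Rightarrow> (real \<times> real) filter" where
  "intervals_at x0 = (INF \<delta>\<in>{0<..}. principal {(a, b). a < b \<and> a \<le> x0 \<and> x0 \<le> b \<and> b - a < \<delta>})"

lemma eventually_intervals_at:
  "eventually P (intervals_at x0) \<longleftrightarrow>
     (\<exists>\<delta>>0. \<forall>a b. a < b \<and> a \<le> x0 \<and> x0 \<le> b \<and> b - a < \<delta> \<longrightarrow> P (a, b))"
  unfolding intervals_at_def
proof (subst eventually_INF_base)
  fix \<delta>1 \<delta>2 :: real
  assume "\<delta>1 \<in> {0<..}" "\<delta>2 \<in> {0<..}"
  then show "\<exists>\<delta>\<in>{0<..}. principal {(a, b). a < b \<and> a \<le> x0 \<and> x0 \<le> b \<and> b - a < \<delta>}
      \<le> inf (principal {(a, b). a < b \<and> a \<le> x0 \<and> x0 \<le> b \<and> b - a < \<delta>1})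
            (principal {(a, b). a < b \<and> a \<le> x0 \<and> x0 \<le> b \<and> b - a < \<delta>2})"
    by (intro bexI[of _ "min \<delta>1 \<delta>2"]) auto
qed (auto simp: eventually_principal)

lemma eventually_nondegenerate_intervals_at: "eventually (\<lambda>J. fst J < snd J) (intervals_at x0)"
  unfolding eventually_intervals_at by (intro exI[of _ 1]) auto

lemma tendsto_length_intervals_at: "((\<lambda>J. snd J - fst J) \<longlongrightarrow> 0) (intervals_at x0)"
proof (rule order_tendstoI)
  show "eventually (\<lambda>J. y < snd J - fst J) (intervals_at x0)" if "y < 0" for y
    using eventually_nondegenerate_intervals_at by eventually_elim (use that in auto)
  show "eventually (\<lambda>J. snd J - fst J < y) (intervals_at x0)" if "0 < y" for y
    unfolding eventually_intervals_at using that by auto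
qed

lemma tendsto_intervals_atD:
  fixes f :: "real \<times> real \<Rightarrow> real"
  assumes "(f \<longlongrightarrow> l) (intervals_at x0)" and "0 < \<epsilon>"
  shows "\<exists>\<delta>>0. \<forall>a b. a < b \<and> a \<le> x0 \<and> x0 \<le> b \<and> b - a < \<delta> \<longrightarrow> \<bar>f (a, b) - l\<bar> < \<epsilon>"
  using tendstoD[OF assms] unfolding eventually_intervals_at dist_real_def .

text \<open>Since \<open>[a, b] \<subseteq> [x\<^sub>0 - (b - a), x\<^sub>0 + (b - a)]\<close>, the mean deviation over \<open>[a, b]\<close> is at most
  twice the centred average in the definition of a Lebesgue point.\<close>

lemma lebesgue_point_mean_dev_tendsto:
  fixes f :: "real \<Rightarrow> real"
  assumes lp: "lebesgue_point f x0" and f: "\<And>a b. set_integrable lebesgue {a..b} f"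
  shows "((\<lambda>J. mean_dev f (f x0) (fst J) (snd J)) \<longlongrightarrow> 0) (intervals_at x0)"
proof -
  define avg where "avg r = 1 / (2 * r) * (LINT t:{x0 - r..x0 + r}|lebesgue. \<bar>f t - f x0\<bar>)" for r
  have "filterlim (\<lambda>J. snd J - fst J) (at_right 0) (intervals_at x0)"
    using tendsto_length_intervals_at eventually_nondegenerate_intervals_at
    by (intro tendsto_imp_filterlim_at_right) auto
  then have avg: "((\<lambda>J. avg (snd J - fst J)) \<longlongrightarrow> 0) (intervals_at x0)"
    using lp unfolding lebesgue_point_def avg_def by (rule filterlim_compose[rotated])
  have bound: "mean_dev f (f x0) a b \<le> 2 * avg (b - a)" if ab: "a < b" "a \<le> x0" "x0 \<le> b" for a b
  proof -
    define L where "L = b - a"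
    have "set_integrable lebesgue {a..b} (\<lambda>t. \<bar>f t - f x0\<bar>)"
      and "set_integrable lebesgue {x0 - L..x0 + L} (\<lambda>t. \<bar>f t - f x0\<bar>)"
      by (rule set_integrable_abs_diff_const[OF f])+
    then have "(LINT t:{a..b}|lebesgue. \<bar>f t - f x0\<bar>) \<le> (LINT t:{x0 - L..x0 + L}|lebesgue. \<bar>f t - f x0\<bar>)"
      unfolding set_lebesgue_integral_def set_integrable_def
      by (rule integral_mono) (use ab in \<open>auto simp: indicator_def L_def\<close>)
    moreover have "2 * avg L = (LINT t:{x0 - L..x0 + L}|lebesgue. \<bar>f t - f x0\<bar>) / L"
      by (simp add: avg_def)
    ultimately show ?thesis
      using ab by (simp add: mean_dev_def L_def divide_right_mono)
  qed
  have "eventually (\<lambda>J. mean_dev f (f x0) (fst J) (snd J) \<le> 2 * avg (snd J - fst J)) (intervals_at x0)"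
    unfolding eventually_intervals_at using bound by (intro exI[of _ 1]) simp
  moreover have "eventually (\<lambda>J. 0 \<le> mean_dev f (f x0) (fst J) (snd J)) (intervals_at x0)"
    using eventually_nondegenerate_intervals_at by eventually_elim (simp add: mean_dev_nonneg)
  ultimately show ?thesis
    by (intro tendsto_sandwich[OF _ _ tendsto_const tendsto_mult_right_zero[OF avg]])
qed

lemma lebesgue_point_bounds:
  fixes f :: "real \<Rightarrow> real"
  assumes lp: "lebesgue_point f x0" and f: "\<And>a b. set_integrable lebesgue {a..b} f"
    and bounds: "AE x in lebesgue. lo \<le> f x \<and> f x \<le> hi"
  shows "lo \<le> f x0 \<and> f x0 \<le> hi"
proof (rule ccontr)
  assume "\<not> (lo \<le> f x0 \<and> f x0 \<le> hi)"
  define d where "d = max (lo - f x0) (f x0 - hi)"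
  have "0 < d"
    using \<open>\<not> (lo \<le> f x0 \<and> f x0 \<le> hi)\<close> by (auto simp: d_def)
  have d: "AE x in lebesgue. d \<le> \<bar>f x - f x0\<bar>"
    using bounds by eventually_elim (auto simp: d_def)
  have "d \<le> 1 / (2 * r) * (LINT t:{x0 - r..x0 + r}|lebesgue. \<bar>f t - f x0\<bar>)" if "0 < r" for r
  proof -
    have "(LINT t:{x0 - r..x0 + r}|lebesgue. d) \<le> (LINT t:{x0 - r..x0 + r}|lebesgue. \<bar>f t - f x0\<bar>)"
      using d by (intro set_integral_mono_AE absolutely_integrable_continuous_real
          set_integrable_abs_diff_const f) (auto elim!: eventually_mono)
    moreover have "(LINT t:{x0 - r..x0 + r}|lebesgue. d) = 2 * r * d"
      using that by (subst set_integral_const) auto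
    ultimately show ?thesis
      using that by (simp add: field_simps)
  qed
  then have "d \<le> 0"
    using lp unfolding lebesgue_point_def
    by (intro tendsto_lowerbound) (auto simp: eventually_at_right_field intro!: exI[of _ 1])
  with \<open>0 < d\<close> show False
    by simp
qed

lemma completing_square_le:
  fixes P z g :: real
  assumes "0 < P"
  shows "2 * (z * g) - z\<^sup>2 / P \<le> P * g\<^sup>2"
proof -
  have "0 \<le> (P * g - z)\<^sup>2 / P"
    using assms by simp
  also have "\<dots> = P * g\<^sup>2 - (2 * (z * g) - z\<^sup>2 / P)"
    using assms by (simp add: field_simps power2_eq_square)
  finally show ?thesis
    by simp
qed

lemma sin_le_sin_between:
  fixes c y :: real
  assumes "0 < c" "c \<le> y" "y \<le> pi - c"
  shows "sin c \<le> sin y"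
proof (cases "y \<le> pi / 2")
  case True
  then show ?thesis
    using assms by (intro sin_monotone_2pi_le) auto
next
  case False
  then have "sin c \<le> sin (pi - y)"
    using assms by (intro sin_monotone_2pi_le) auto
  then show ?thesis
    by simp
qed

lemma sin_enlarged_margin_pos:
  fixes \<theta> :: real
  assumes "0 < \<theta>"
  shows "0 < sin (pi * \<theta> / (1 + 2 * \<theta>))"
  using assms by (intro sin_gt_zero) (auto simp: field_simps intro!: add_pos_pos)

text \<open>On \<open>[a, b]\<close>, the phase of \<open>sin\<close> for the interval enlarged by \<open>\<theta> (b - a)\<close> on both sides stays
  in \<open>[c, \<pi> - c]\<close> with \<open>c = \<pi> \<theta> / (1 + 2 \<theta>)\<close>.\<close>

lemma sin_enlarged_interval_ge:
  fixes a b \<theta> x :: real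
  assumes "a < b" and "0 < \<theta>" and "x \<in> {a..b}"
  shows "sin (pi * \<theta> / (1 + 2 * \<theta>)) \<le> sin (pi / ((b - a) * (1 + 2 * \<theta>)) * (x - (a - \<theta> * (b - a))))"
proof (rule sin_le_sin_between)
  define k where "k = pi / ((b - a) * (1 + 2 * \<theta>))"
  define m where "m = k * (b - a)"
  have "m = pi / (1 + 2 * \<theta>)" "1 + 2 * \<theta> \<noteq> 0"
    using assms by (simp_all add: m_def k_def)
  then have "m + 2 * (\<theta> * m) = pi" "pi * \<theta> / (1 + 2 * \<theta>) = \<theta> * m"
    by (simp_all add: field_simps)
  moreover have "k * (x - (a - \<theta> * (b - a))) = k * (x - a) + \<theta> * m"
    by (simp add: m_def algebra_simps)
  moreover have "0 < k"
    using assms by (simp add: k_def)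
  then have "0 \<le> k * (x - a)" "k * (x - a) \<le> m"
    using assms by (auto simp: m_def intro!: mult_left_mono)
  ultimately show "pi * \<theta> / (1 + 2 * \<theta>) \<le> k * (x - (a - \<theta> * (b - a)))"
    "k * (x - (a - \<theta> * (b - a))) \<le> pi - pi * \<theta> / (1 + 2 * \<theta>)"
    by linarith+
qed (use assms in \<open>auto intro: sin_enlarged_margin_pos\<close>)

lemma has_real_derivative_cot:
  fixes c k x0 :: real
  assumes "sin (k * (x - x0)) \<noteq> 0"
  shows "((\<lambda>x. c * k * (cos (k * (x - x0)) / sin (k * (x - x0)))) has_real_derivative
          - c * k\<^sup>2 / (sin (k * (x - x0)))\<^sup>2) (at x within S)"
proof -
  have "((\<lambda>x. c * k * (cos (k * (x - x0)) / sin (k * (x - x0)))) has_real_derivative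
      c * k * ((- sin (k * (x - x0)) * (k * 1) * sin (k * (x - x0))
        - cos (k * (x - x0)) * (cos (k * (x - x0)) * (k * 1))) / (sin (k * (x - x0)))\<^sup>2)) (at x within S)"
    using assms by (auto intro!: derivative_eq_intros simp: power2_eq_square algebra_simps)
  moreover have "c * k * ((- sin (k * (x - x0)) * (k * 1) * sin (k * (x - x0))
        - cos (k * (x - x0)) * (cos (k * (x - x0)) * (k * 1))) / (sin (k * (x - x0)))\<^sup>2)
      = - c * k\<^sup>2 / (sin (k * (x - x0)))\<^sup>2"
  proof -
    have "- sin y * (k * 1) * sin y - cos y * (cos y * (k * 1)) = - k" for y
      using sin_cos_squared_add[of y] by (simp add: power2_eq_square algebra_simps flip: distrib_left)
    then show ?thesis
      by (simp add: power2_eq_square)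
  qed
  ultimately show ?thesis
    by simp
qed

text \<open>\<open>Z = p\<^sub>0 k cot y\<close> solves \<open>Z' + Z\<^sup>2 / p\<^sub>0 = - p\<^sub>0 k\<^sup>2\<close> exactly.\<close>

lemma riccati_cot_le:
  fixes P p0 k \<sigma> y \<beta> :: real
  assumes "0 < \<sigma>" "\<sigma> \<le> sin y" "0 < \<beta>" "1 / \<beta> \<le> P" "0 \<le> p0"
  shows "- p0 * k\<^sup>2 / (sin y)\<^sup>2 + (p0 * k * (cos y / sin y))\<^sup>2 / P
           \<le> - p0 * k\<^sup>2 + p0 * k\<^sup>2 * \<beta> * \<bar>P - p0\<bar> / \<sigma>\<^sup>2"
proof -
  define E where "E = (cos y)\<^sup>2 / (sin y)\<^sup>2"
  have "0 < sin y" "0 < P"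
    using assms by (auto intro: less_le_trans[of 0 "1 / \<beta>"])
  have E: "0 \<le> E" "E \<le> 1 / \<sigma>\<^sup>2"
    using assms \<open>0 < sin y\<close> by (auto simp: E_def abs_square_le_1 intro!: frac_le power_mono)
  have dev: "(p0 - P) / P \<le> \<beta> * \<bar>P - p0\<bar>"
  proof -
    have "(p0 - P) / P \<le> \<bar>P - p0\<bar> * (1 / P)"
      using \<open>0 < P\<close> by (simp add: divide_right_mono)
    also have "\<dots> \<le> \<bar>P - p0\<bar> * \<beta>"
      using assms \<open>0 < P\<close> by (intro mult_left_mono) (auto simp: field_simps)
    finally show ?thesis
      by (simp add: mult.commute)
  qed
  have "- p0 * k\<^sup>2 / (sin y)\<^sup>2 = - p0 * k\<^sup>2 * (1 + E)"
    using \<open>0 < sin y\<close> sin_cos_squared_add[of y] by (simp add: E_def field_simps)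
  moreover have "(p0 * k * (cos y / sin y))\<^sup>2 = p0\<^sup>2 * k\<^sup>2 * E"
    by (simp add: E_def power_mult_distrib power_divide)
  moreover have "- p0 * k\<^sup>2 * (1 + E) + p0\<^sup>2 * k\<^sup>2 * E / P = - p0 * k\<^sup>2 + p0 * k\<^sup>2 * (E * ((p0 - P) / P))"
    using \<open>0 < P\<close> by (simp add: field_simps power2_eq_square)
  ultimately have "- p0 * k\<^sup>2 / (sin y)\<^sup>2 + (p0 * k * (cos y / sin y))\<^sup>2 / P
      = - p0 * k\<^sup>2 + p0 * k\<^sup>2 * (E * ((p0 - P) / P))"
    by simp
  also have "\<dots> \<le> - p0 * k\<^sup>2 + p0 * k\<^sup>2 * (1 / \<sigma>\<^sup>2 * (\<beta> * \<bar>P - p0\<bar>))"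
  proof -
    have "E * ((p0 - P) / P) \<le> E * (\<beta> * \<bar>P - p0\<bar>)"
      using E dev by (intro mult_left_mono) auto
    also have "\<dots> \<le> 1 / \<sigma>\<^sup>2 * (\<beta> * \<bar>P - p0\<bar>)"
      using E assms by (intro mult_right_mono) auto
    finally show ?thesis
      using assms by (intro add_left_mono mult_left_mono) auto
  qed
  finally show ?thesis
    by simp
qed

locale sturm_liouville =
  fixes \<beta> :: real and p q w :: "real \<Rightarrow> real"
  assumes beta_pos: "0 < \<beta>"
    and p_measurable [measurable]: "p \<in> borel_measurable lebesgue"
    and q_measurable [measurable]: "q \<in> borel_measurable lebesgue"
    and w_measurable [measurable]: "w \<in> borel_measurable lebesgue"
    and q_bounds: "AE x in lebesgue. 0 \<le> q x \<and> q x \<le> \<beta>"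
    and p_bounds: "AE x in lebesgue. 1 / \<beta> \<le> p x \<and> p x \<le> \<beta>"
    and w_bounds: "AE x in lebesgue. 1 / \<beta> \<le> w x \<and> w x \<le> \<beta>"
begin

lemma p_pos: "AE x in lebesgue. 0 < p x"
proof -
  have "0 < 1 / \<beta>"
    using beta_pos by simp
  show ?thesis
    using p_bounds by eventually_elim (use \<open>0 < 1 / \<beta>\<close> in linarith)
qed

lemma coefficients_abs_le:
  shows "AE x in lebesgue. \<bar>p x\<bar> \<le> \<beta>" "AE x in lebesgue. \<bar>q x\<bar> \<le> \<beta>" "AE x in lebesgue. \<bar>w x\<bar> \<le> \<beta>"
proof -
  have "0 < 1 / \<beta>"
    using beta_pos by simp
  show "AE x in lebesgue. \<bar>p x\<bar> \<le> \<beta>"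
    using p_bounds by eventually_elim (use \<open>0 < 1 / \<beta>\<close> in \<open>unfold abs_le_iff, linarith\<close>)
  show "AE x in lebesgue. \<bar>q x\<bar> \<le> \<beta>"
    using q_bounds by eventually_elim auto
  show "AE x in lebesgue. \<bar>w x\<bar> \<le> \<beta>"
    using w_bounds by eventually_elim (use \<open>0 < 1 / \<beta>\<close> in \<open>unfold abs_le_iff, linarith\<close>)
qed

lemma coefficients_nonneg:
  shows "AE x in lebesgue. 0 \<le> p x" "AE x in lebesgue. 0 \<le> q x" "AE x in lebesgue. 0 \<le> w x"
proof -
  have "0 < 1 / \<beta>"
    using beta_pos by simp
  show "AE x in lebesgue. 0 \<le> p x"
    using p_bounds by eventually_elim (use \<open>0 < 1 / \<beta>\<close> in linarith)
  show "AE x in lebesgue. 0 \<le> q x"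
    using q_bounds by eventually_elim simp
  show "AE x in lebesgue. 0 \<le> w x"
    using w_bounds by eventually_elim (use \<open>0 < 1 / \<beta>\<close> in linarith)
qed

lemma set_integrable_coefficient_mult:
  assumes "set_integrable lebesgue A h"
  shows "set_integrable lebesgue A (\<lambda>x. p x * h x)" "set_integrable lebesgue A (\<lambda>x. q x * h x)"
    "set_integrable lebesgue A (\<lambda>x. w x * h x)"
  using assms coefficients_abs_le by (auto intro: set_integrable_bounded_mult)

lemma set_integrable_divide_p:
  assumes "set_integrable lebesgue A h"
  shows "set_integrable lebesgue A (\<lambda>x. h x / p x)"
proof -
  have "AE x in lebesgue. \<bar>1 / p x\<bar> \<le> \<beta>"
    using p_bounds p_pos by eventually_elim (use beta_pos in \<open>auto simp: field_simps\<close>)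
  then show ?thesis
    using set_integrable_bounded_mult[OF assms, of "\<lambda>x. 1 / p x"] by simp
qed

lemma set_integrable_coefficient:
  shows "set_integrable lebesgue {a..b} p" "set_integrable lebesgue {a..b} w"
  using set_integrable_coefficient_mult[OF absolutely_integrable_continuous_real[of a b "\<lambda>_. 1"]]
  by auto

lemma set_integral_le_beta_coefficient:
  assumes h: "set_integrable lebesgue A h" and h_nonneg: "\<And>x. x \<in> A \<Longrightarrow> 0 \<le> h x"
  shows "(LINT x:A|lebesgue. h x) \<le> \<beta> * (LINT x:A|lebesgue. p x * h x)"
    and "(LINT x:A|lebesgue. h x) \<le> \<beta> * (LINT x:A|lebesgue. w x * h x)"
proof -
  have "(LINT x:A|lebesgue. h x) \<le> \<beta> * (LINT x:A|lebesgue. f x * h x)"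
    if f: "AE x in lebesgue. 1 / \<beta> \<le> f x \<and> f x \<le> \<beta>" and fh: "set_integrable lebesgue A (\<lambda>x. f x * h x)"
    for f
    unfolding set_integral_mult_right[symmetric]
  proof (rule set_integral_mono_AE[OF h set_integrable_mult_right[OF fh]])
    show "AE x\<in>A in lebesgue. h x \<le> \<beta> * (f x * h x)"
      using f
    proof eventually_elim
      case (elim x)
      then have "1 \<le> \<beta> * f x"
        using beta_pos by (simp add: field_simps)
      then show ?case
        using mult_right_mono[of 1 "\<beta> * f x" "h x"] h_nonneg by (auto simp: mult.assoc)
    qed
  qed
  then show "(LINT x:A|lebesgue. h x) \<le> \<beta> * (LINT x:A|lebesgue. p x * h x)"
    and "(LINT x:A|lebesgue. h x) \<le> \<beta> * (LINT x:A|lebesgue. w x * h x)"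
    using p_bounds w_bounds set_integrable_coefficient_mult[OF h] by auto
qed

lemma rayleigh_nonneg: "0 \<le> rayleigh p q w a b u g"
  unfolding rayleigh_def
  by (intro divide_nonneg_nonneg add_nonneg_nonneg set_integral_mult_square_nonneg coefficients_nonneg)

lemma lambdaJ_le_rayleigh:
  assumes "(u, g) \<in> H10 a b" and "\<exists>x\<in>{a<..<b}. u x \<noteq> 0"
  shows "lambdaJ p q w a b \<le> rayleigh p q w a b u g"
  unfolding lambdaJ_def
  by (rule cInf_lower) (use assms rayleigh_nonneg in \<open>auto intro!: bdd_belowI[of _ 0]\<close>)

text \<open>Completing the square, \<open>p g\<^sup>2 \<ge> 2 Z u g - Z\<^sup>2 u\<^sup>2 / p\<close>, and integrating \<open>2 Z u g\<close> by parts.\<close>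

lemma riccati_inequality:
  fixes Z Z' :: "real \<Rightarrow> real"
  assumes ug: "(u, g) \<in> H10 a b" and "a \<le> b"
    and Z: "\<And>x. x \<in> {a..b} \<Longrightarrow> (Z has_real_derivative Z' x) (at x within {a..b})"
    and Z': "continuous_on {a..b} Z'"
  shows "- (LINT x:{a..b}|lebesgue. (Z' x + (Z x)\<^sup>2 / p x) * (u x)\<^sup>2)
    \<le> (LINT x:{a..b}|lebesgue. p x * (g x)\<^sup>2)"
proof -
  have uc: "continuous_on {a..b} u"
    by (rule H10_continuous_on[OF ug])
  have Zc: "continuous_on {a..b} Z"
    using Z by (rule DERIV_continuous_on)
  have int_Zug: "set_integrable lebesgue {a..b} (\<lambda>x. Z x * u x * g x)"
    using H10D(2)[OF ug] by (rule set_integrable_continuous_mult) (intro continuous_intros Zc uc)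
  have int_Z'u: "set_integrable lebesgue {a..b} (\<lambda>x. Z' x * (u x)\<^sup>2)"
    by (intro absolutely_integrable_continuous_real continuous_intros Z' uc)
  have int_Zup: "set_integrable lebesgue {a..b} (\<lambda>x. (Z x * u x)\<^sup>2 / p x)"
    by (intro set_integrable_divide_p absolutely_integrable_continuous_real continuous_intros Zc uc)
  have "- (LINT x:{a..b}|lebesgue. (Z' x + (Z x)\<^sup>2 / p x) * (u x)\<^sup>2)
      = - (LINT x:{a..b}|lebesgue. Z' x * (u x)\<^sup>2 + (Z x * u x)\<^sup>2 / p x)"
    by (simp add: algebra_simps power_mult_distrib)
  also have "\<dots> = 2 * (LINT x:{a..b}|lebesgue. Z x * u x * g x)
      - (LINT x:{a..b}|lebesgue. (Z x * u x)\<^sup>2 / p x)"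
    using int_Z'u int_Zup H10_integral_deriv_mult_square[OF ug \<open>a \<le> b\<close> Z Z']
    by (simp add: set_integral_add)
  also have "\<dots> = (LINT x:{a..b}|lebesgue. 2 * (Z x * u x * g x) - (Z x * u x)\<^sup>2 / p x)"
    using int_Zug int_Zup by (simp add: set_integral_diff set_integrable_mult_right)
  also have "\<dots> \<le> (LINT x:{a..b}|lebesgue. p x * (g x)\<^sup>2)"
  proof (rule set_integral_mono_AE)
    show "set_integrable lebesgue {a..b} (\<lambda>x. 2 * (Z x * u x * g x) - (Z x * u x)\<^sup>2 / p x)"
      using int_Zug int_Zup by (intro set_integral_diff(1) set_integrable_mult_right)
    show "set_integrable lebesgue {a..b} (\<lambda>x. p x * (g x)\<^sup>2)"
      by (rule set_integrable_coefficient_mult(1)[OF H10D(3)[OF ug]])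
    show "AE x\<in>{a..b} in lebesgue. 2 * (Z x * u x * g x) - (Z x * u x)\<^sup>2 / p x \<le> p x * (g x)\<^sup>2"
      using p_pos
    proof eventually_elim
      case (elim x)
      then show ?case
        using completing_square_le[OF elim, of "Z x * u x" "g x"] by (simp add: mult.assoc)
    qed
  qed
  finally show ?thesis .
qed

lemma set_integrable_riccati_integrand:
  assumes "continuous_on {a..b} Z" "continuous_on {a..b} Z'" "continuous_on {a..b} u"
  shows "set_integrable lebesgue {a..b} (\<lambda>x. (Z' x + (Z x)\<^sup>2 / p x) * (u x)\<^sup>2)"
proof -
  have "set_integrable lebesgue {a..b} (\<lambda>x. Z' x * (u x)\<^sup>2 + (Z x)\<^sup>2 * (u x)\<^sup>2 / p x)"
    using assms by (intro set_integral_add(1) set_integrable_divide_p absolutely_integrable_continuous_real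
        continuous_intros)
  then show ?thesis
    by (simp add: algebra_simps)
qed

lemma riccati_inequality_perturbed:
  fixes Z Z' :: "real \<Rightarrow> real"
  assumes ug: "(u, g) \<in> H10 a b" and "a < b"
    and Z: "\<And>x. x \<in> {a..b} \<Longrightarrow> (Z has_real_derivative Z' x) (at x within {a..b})"
    and Z': "continuous_on {a..b} Z'" and "0 \<le> d"
    and riccati_le: "\<And>x P. x \<in> {a..b} \<Longrightarrow> 1 / \<beta> \<le> P \<Longrightarrow> Z' x + (Z x)\<^sup>2 / P \<le> - c + d * \<bar>P - p0\<bar>"
  shows "c * (LINT x:{a..b}|lebesgue. (u x)\<^sup>2)
    \<le> (LINT x:{a..b}|lebesgue. p x * (g x)\<^sup>2)
      + d * (b - a)\<^sup>2 * mean_dev p p0 a b * (LINT x:{a..b}|lebesgue. (g x)\<^sup>2)"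
proof -
  define L where "L = b - a"
  define Gs where "Gs = (LINT x:{a..b}|lebesgue. (g x)\<^sup>2)"
  have uc: "continuous_on {a..b} u"
    by (rule H10_continuous_on[OF ug])
  have pointwise: "AE x\<in>{a..b} in lebesgue.
      (Z' x + (Z x)\<^sup>2 / p x) * (u x)\<^sup>2 \<le> - c * (u x)\<^sup>2 + d * (L * Gs) * \<bar>p x - p0\<bar>"
    using p_bounds
  proof eventually_elim
    case (elim x)
    show ?case
    proof
      assume x: "x \<in> {a..b}"
      have "(Z' x + (Z x)\<^sup>2 / p x) * (u x)\<^sup>2 \<le> (- c + d * \<bar>p x - p0\<bar>) * (u x)\<^sup>2"
        using riccati_le[OF x] elim by (intro mult_right_mono) auto
      moreover have "d * \<bar>p x - p0\<bar> * (u x)\<^sup>2 \<le> d * \<bar>p x - p0\<bar> * (L * Gs)"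
        using H10_square_le[OF ug x] \<open>0 \<le> d\<close> by (intro mult_left_mono) (auto simp: L_def Gs_def)
      ultimately show "(Z' x + (Z x)\<^sup>2 / p x) * (u x)\<^sup>2 \<le> - c * (u x)\<^sup>2 + d * (L * Gs) * \<bar>p x - p0\<bar>"
        by (simp add: algebra_simps)
    qed
  qed
  have int_u2: "set_integrable lebesgue {a..b} (\<lambda>x. (u x)\<^sup>2)"
    by (intro absolutely_integrable_continuous_real continuous_intros uc)
  have int_dev: "set_integrable lebesgue {a..b} (\<lambda>x. \<bar>p x - p0\<bar>)"
    by (rule set_integrable_abs_diff_const[OF set_integrable_coefficient(1)])
  have "- (LINT x:{a..b}|lebesgue. p x * (g x)\<^sup>2)
      \<le> (LINT x:{a..b}|lebesgue. (Z' x + (Z x)\<^sup>2 / p x) * (u x)\<^sup>2)"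
    using riccati_inequality[OF ug less_imp_le[OF \<open>a < b\<close>] Z Z'] by simp
  also have "\<dots> \<le> (LINT x:{a..b}|lebesgue. - c * (u x)\<^sup>2 + d * (L * Gs) * \<bar>p x - p0\<bar>)"
    using int_u2 int_dev
    by (intro set_integral_mono_AE[OF _ _ pointwise] set_integrable_riccati_integrand
        DERIV_continuous_on[OF Z] Z' uc set_integral_add(1) set_integrable_mult_right)
  also have "\<dots> = - c * (LINT x:{a..b}|lebesgue. (u x)\<^sup>2) + d * L\<^sup>2 * mean_dev p p0 a b * Gs"
    using int_u2 int_dev \<open>a < b\<close>
    by (simp add: set_integral_add set_integrable_mult_right L_def set_integral_abs_diff_eq_mean_dev
        power2_eq_square mult_ac)
  finally show ?thesis
    by (simp add: L_def Gs_def)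
qed

text \<open>Enlarging the interval by \<open>\<theta> (b - a)\<close> on both sides keeps the cotangent weight bounded on
  \<open>[a, b]\<close>.  For constant \<open>p = p\<^sub>0\<close> this is Wirtinger's inequality up to the factor \<open>(1 + 2 \<theta>)\<^sup>2\<close>.\<close>

lemma H10_poincare_perturbed:
  assumes ug: "(u, g) \<in> H10 a b" and "a < b" and "0 < \<theta>" and "0 < p0"
  shows "(LINT x:{a..b}|lebesgue. (u x)\<^sup>2)
    \<le> ((b - a) * (1 + 2 * \<theta>) / pi)\<^sup>2 / p0 * (LINT x:{a..b}|lebesgue. p x * (g x)\<^sup>2)
      + \<beta> * (b - a)\<^sup>2 * mean_dev p p0 a b * (LINT x:{a..b}|lebesgue. (g x)\<^sup>2)
          / (sin (pi * \<theta> / (1 + 2 * \<theta>)))\<^sup>2"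
proof -
  define k where "k = pi / ((b - a) * (1 + 2 * \<theta>))"
  define a0 where "a0 = a - \<theta> * (b - a)"
  define \<sigma> where "\<sigma> = sin (pi * \<theta> / (1 + 2 * \<theta>))"
  define Z where "Z x = p0 * k * (cos (k * (x - a0)) / sin (k * (x - a0)))" for x
  define Z' where "Z' x = - p0 * k\<^sup>2 / (sin (k * (x - a0)))\<^sup>2" for x
  have k: "0 < k"
    using \<open>a < b\<close> \<open>0 < \<theta>\<close> by (simp add: k_def)
  have "0 < \<sigma>"
    unfolding \<sigma>_def using \<open>0 < \<theta>\<close> by (rule sin_enlarged_margin_pos)
  have sin_ge: "\<sigma> \<le> sin (k * (x - a0))" if "x \<in> {a..b}" for x
    unfolding \<sigma>_def k_def a0_def using \<open>a < b\<close> \<open>0 < \<theta>\<close> that by (rule sin_enlarged_interval_ge)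
  have Z: "(Z has_real_derivative Z' x) (at x within {a..b})" if "x \<in> {a..b}" for x
    unfolding Z_def Z'_def using sin_ge[OF that] \<open>0 < \<sigma>\<close> by (intro has_real_derivative_cot) auto
  have Z': "continuous_on {a..b} Z'"
    unfolding Z'_def using sin_ge \<open>0 < \<sigma>\<close> by (intro continuous_intros) force
  have "p0 * k\<^sup>2 * (LINT x:{a..b}|lebesgue. (u x)\<^sup>2)
      \<le> (LINT x:{a..b}|lebesgue. p x * (g x)\<^sup>2)
        + p0 * k\<^sup>2 * \<beta> / \<sigma>\<^sup>2 * (b - a)\<^sup>2 * mean_dev p p0 a b * (LINT x:{a..b}|lebesgue. (g x)\<^sup>2)"
  proof (rule riccati_inequality_perturbed[OF ug \<open>a < b\<close> Z Z'])
    show "Z' x + (Z x)\<^sup>2 / P \<le> - (p0 * k\<^sup>2) + p0 * k\<^sup>2 * \<beta> / \<sigma>\<^sup>2 * \<bar>P - p0\<bar>"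
      if "x \<in> {a..b}" "1 / \<beta> \<le> P" for x P
      using riccati_cot_le[OF \<open>0 < \<sigma>\<close> sin_ge[OF that(1)] beta_pos that(2) less_imp_le[OF \<open>0 < p0\<close>]]
      by (simp add: Z_def Z'_def)
  qed (use \<open>0 < p0\<close> beta_pos in auto)
  then have "(LINT x:{a..b}|lebesgue. (u x)\<^sup>2)
      \<le> 1 / (p0 * k\<^sup>2) * (LINT x:{a..b}|lebesgue. p x * (g x)\<^sup>2)
        + \<beta> * (b - a)\<^sup>2 * mean_dev p p0 a b * (LINT x:{a..b}|lebesgue. (g x)\<^sup>2) / \<sigma>\<^sup>2"
    using \<open>0 < p0\<close> k by (simp add: field_simps)
  also have "1 / (p0 * k\<^sup>2) = ((b - a) * (1 + 2 * \<theta>) / pi)\<^sup>2 / p0"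
    by (simp add: k_def power_divide)
  finally show ?thesis
    unfolding \<sigma>_def .
qed

lemma H10_deriv_square_le:
  assumes "(u, g) \<in> H10 a b"
  shows "(LINT x:{a..b}|lebesgue. (g x)\<^sup>2) \<le> \<beta> * (LINT x:{a..b}|lebesgue. p x * (g x)\<^sup>2)"
  using H10D(3)[OF assms] by (rule set_integral_le_beta_coefficient(1)) simp

lemma H10_weighted_square_le:
  assumes ug: "(u, g) \<in> H10 a b" and "a < b"
  shows "(LINT x:{a..b}|lebesgue. w x * (u x)\<^sup>2)
    \<le> w0 * (LINT x:{a..b}|lebesgue. (u x)\<^sup>2)
      + (b - a)\<^sup>2 * mean_dev w w0 a b * (LINT x:{a..b}|lebesgue. (g x)\<^sup>2)"
proof -
  have int_u2: "set_integrable lebesgue {a..b} (\<lambda>x. (u x)\<^sup>2)"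
    by (intro absolutely_integrable_continuous_real continuous_intros H10_continuous_on[OF ug])
  have "\<bar>(LINT x:{a..b}|lebesgue. w x * (u x)\<^sup>2) - w0 * (LINT x:{a..b}|lebesgue. (u x)\<^sup>2)\<bar>
      \<le> (b - a) * (LINT x:{a..b}|lebesgue. (g x)\<^sup>2) * (LINT x:{a..b}|lebesgue. \<bar>w x - w0\<bar>)"
    using H10_square_le[OF ug]
    by (intro set_integral_weighted_deviation set_integrable_coefficient_mult(3) int_u2
        set_integrable_abs_diff_const set_integrable_coefficient(2)) auto
  then show ?thesis
    using \<open>a < b\<close> by (simp add: abs_le_iff set_integral_abs_diff_eq_mean_dev power2_eq_square mult_ac)
qed

lemma H10_weighted_square_pos:
  assumes ug: "(u, g) \<in> H10 a b" and "x \<in> {a<..<b}" and "u x \<noteq> 0"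
  shows "0 < (LINT x:{a..b}|lebesgue. w x * (u x)\<^sup>2)"
proof -
  have uc: "continuous_on {a..b} u"
    by (rule H10_continuous_on[OF ug])
  have "0 < (LINT x:{a..b}|lebesgue. (u x)\<^sup>2)"
    using assms uc by (intro set_integral_pos_continuous continuous_intros) auto
  also have "\<dots> \<le> \<beta> * (LINT x:{a..b}|lebesgue. w x * (u x)\<^sup>2)"
    using uc
    by (intro set_integral_le_beta_coefficient(2) absolutely_integrable_continuous_real continuous_intros)
       auto
  finally show ?thesis
    using beta_pos by (simp add: zero_less_mult_iff)
qed

text \<open>Poincare's inequality bounds \<open>\<integral> u\<^sup>2\<close> by \<open>\<integral> p u'\<^sup>2\<close>, and \<open>\<integral> w u\<^sup>2\<close> is close to \<open>w\<^sub>0 \<integral> u\<^sup>2\<close>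
  because \<open>u\<^sup>2 \<le> (b - a) \<integral> u'\<^sup>2\<close>.\<close>

lemma H10_weighted_square_le_energy:
  assumes ug: "(u, g) \<in> H10 a b" and "a < b" and "0 < \<theta>" and "0 < p0" and "0 \<le> w0"
  shows "(LINT x:{a..b}|lebesgue. w x * (u x)\<^sup>2)
    \<le> (b - a)\<^sup>2 * (w0 * (1 + 2 * \<theta>)\<^sup>2 / (p0 * pi\<^sup>2)
          + w0 * \<beta>\<^sup>2 * mean_dev p p0 a b / (sin (pi * \<theta> / (1 + 2 * \<theta>)))\<^sup>2 + \<beta> * mean_dev w w0 a b)
      * (LINT x:{a..b}|lebesgue. p x * (g x)\<^sup>2)"
proof -
  define L where "L = b - a"
  define \<sigma> where "\<sigma> = sin (pi * \<theta> / (1 + 2 * \<theta>))"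
  define P where "P = (LINT x:{a..b}|lebesgue. p x * (g x)\<^sup>2)"
  define S where "S = (LINT x:{a..b}|lebesgue. (u x)\<^sup>2)"
  define Gs where "Gs = (LINT x:{a..b}|lebesgue. (g x)\<^sup>2)"
  have dev: "0 \<le> mean_dev p p0 a b" "0 \<le> mean_dev w w0 a b"
    using \<open>a < b\<close> by (simp_all add: mean_dev_nonneg)
  have S: "S \<le> (L * (1 + 2 * \<theta>) / pi)\<^sup>2 / p0 * P + \<beta> * L\<^sup>2 * mean_dev p p0 a b * Gs / \<sigma>\<^sup>2"
    using H10_poincare_perturbed[OF ug \<open>a < b\<close> \<open>0 < \<theta>\<close> \<open>0 < p0\<close>]
    by (simp add: S_def P_def Gs_def L_def \<sigma>_def)
  have Gs: "Gs \<le> \<beta> * P"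
    unfolding Gs_def P_def by (rule H10_deriv_square_le[OF ug])
  have "(LINT x:{a..b}|lebesgue. w x * (u x)\<^sup>2) \<le> w0 * S + L\<^sup>2 * mean_dev w w0 a b * Gs"
    using H10_weighted_square_le[OF ug \<open>a < b\<close>] by (simp add: S_def Gs_def L_def)
  also have "\<dots> \<le> w0 * ((L * (1 + 2 * \<theta>) / pi)\<^sup>2 / p0 * P + \<beta> * L\<^sup>2 * mean_dev p p0 a b * (\<beta> * P) / \<sigma>\<^sup>2)
      + L\<^sup>2 * mean_dev w w0 a b * (\<beta> * P)"
    using S Gs dev \<open>0 \<le> w0\<close> beta_pos
    by (intro add_mono mult_left_mono order.trans[OF S] add_left_mono divide_right_mono) auto
  also have "\<dots> = L\<^sup>2 * (w0 * (1 + 2 * \<theta>)\<^sup>2 / (p0 * pi\<^sup>2) + w0 * \<beta>\<^sup>2 * mean_dev p p0 a b / \<sigma>\<^sup>2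
      + \<beta> * mean_dev w w0 a b) * P"
    using \<open>0 < p0\<close> by (simp add: field_simps power2_eq_square)
  finally show ?thesis
    by (simp add: L_def \<sigma>_def P_def)
qed

lemma lambdaJ_scaled_ge:
  assumes "a < b" and "0 < \<theta>" and "0 < p0" and "0 < w0"
  shows "1 / (w0 * (1 + 2 * \<theta>)\<^sup>2 / (p0 * pi\<^sup>2)
              + w0 * \<beta>\<^sup>2 * mean_dev p p0 a b / (sin (pi * \<theta> / (1 + 2 * \<theta>)))\<^sup>2
              + \<beta> * mean_dev w w0 a b)
    \<le> lambdaJ p q w a b * (b - a)\<^sup>2"
proof -
  define K where "K = w0 * (1 + 2 * \<theta>)\<^sup>2 / (p0 * pi\<^sup>2)
    + w0 * \<beta>\<^sup>2 * mean_dev p p0 a b / (sin (pi * \<theta> / (1 + 2 * \<theta>)))\<^sup>2 + \<beta> * mean_dev w w0 a b"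
  have L: "0 < (b - a)\<^sup>2"
    using \<open>a < b\<close> by simp
  have K: "0 < K"
    unfolding K_def using assms beta_pos mean_dev_nonneg[of a b]
    by (intro add_pos_nonneg divide_pos_pos mult_nonneg_nonneg) auto
  have "1 / (K * (b - a)\<^sup>2) \<le> lambdaJ p q w a b"
  proof (rule le_lambdaJ[OF \<open>a < b\<close>])
    fix u g
    assume ug: "(u, g) \<in> H10 a b" and "\<exists>x\<in>{a<..<b}. u x \<noteq> 0"
    define P where "P = (LINT x:{a..b}|lebesgue. p x * (g x)\<^sup>2)"
    define Q where "Q = (LINT x:{a..b}|lebesgue. q x * (u x)\<^sup>2)"
    define W where "W = (LINT x:{a..b}|lebesgue. w x * (u x)\<^sup>2)"
    have "0 < W"
      using \<open>\<exists>x\<in>{a<..<b}. u x \<noteq> 0\<close> H10_weighted_square_pos[OF ug] by (auto simp: W_def)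
    have "W \<le> K * (b - a)\<^sup>2 * P"
      using H10_weighted_square_le_energy[OF ug \<open>a < b\<close> \<open>0 < \<theta>\<close> \<open>0 < p0\<close>] \<open>0 < w0\<close>
      by (simp add: W_def P_def K_def mult_ac)
    have "0 \<le> Q"
      unfolding Q_def by (intro set_integral_mult_square_nonneg coefficients_nonneg)
    have "1 / (K * (b - a)\<^sup>2) \<le> P / W"
      using \<open>W \<le> K * (b - a)\<^sup>2 * P\<close> \<open>0 < W\<close> K L by (simp add: field_simps)
    also have "\<dots> \<le> (P + Q) / W"
      using \<open>0 \<le> Q\<close> \<open>0 < W\<close> by (simp add: divide_right_mono)
    finally show "1 / (K * (b - a)\<^sup>2) \<le> rayleigh p q w a b u g"
      by (simp add: rayleigh_Icc P_def Q_def W_def)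
  qed
  then have "1 / K / (b - a)\<^sup>2 \<le> lambdaJ p q w a b"
    by (metis divide_divide_eq_left)
  then have "1 / K \<le> lambdaJ p q w a b * (b - a)\<^sup>2"
    using L by (subst (asm) pos_divide_le_eq) auto
  then show ?thesis
    unfolding K_def .
qed

lemma sin_test_energy_le:
  assumes "a < b"
  defines "k \<equiv> pi / (b - a)"
  shows "(LINT x:{a..b}|lebesgue. p x * (k * cos (k * (x - a)))\<^sup>2) * (b - a)
    \<le> p0 * pi\<^sup>2 / 2 + pi\<^sup>2 * mean_dev p p0 a b"
proof -
  define g where "g x = k * cos (k * (x - a))" for x
  have g2: "(LINT x:{a..b}|lebesgue. (g x)\<^sup>2) = k\<^sup>2 * ((b - a) / 2)"
    unfolding g_def k_def by (rule set_integral_sin_test_function(2)[OF \<open>a < b\<close>])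
  have g2_int: "set_integrable lebesgue {a..b} (\<lambda>x. (g x)\<^sup>2)"
    unfolding g_def by (intro absolutely_integrable_continuous_real continuous_intros)
  have "(g x)\<^sup>2 \<le> k\<^sup>2" for x
    using mult_left_le[of "(cos (k * (x - a)))\<^sup>2" "k\<^sup>2"]
    by (simp add: g_def abs_square_le_1 power_mult_distrib)
  then have "\<bar>(LINT x:{a..b}|lebesgue. p x * (g x)\<^sup>2) - p0 * (k\<^sup>2 * ((b - a) / 2))\<bar>
      \<le> k\<^sup>2 * ((b - a) * mean_dev p p0 a b)"
    using set_integral_weighted_deviation[OF set_integrable_coefficient_mult(1)[OF g2_int] g2_int
        set_integrable_abs_diff_const[OF set_integrable_coefficient(1)], where c = p0 and H = "k\<^sup>2"] \<open>a < b\<close>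
    by (simp add: g2 set_integral_abs_diff_eq_mean_dev)
  then have "(LINT x:{a..b}|lebesgue. p x * (g x)\<^sup>2) * (b - a)
      \<le> (p0 * (k\<^sup>2 * ((b - a) / 2)) + k\<^sup>2 * ((b - a) * mean_dev p p0 a b)) * (b - a)"
    using \<open>a < b\<close> by (simp add: abs_le_iff)
  also have "\<dots> = p0 * (k * (b - a))\<^sup>2 / 2 + (k * (b - a))\<^sup>2 * mean_dev p p0 a b"
    by (simp add: power2_eq_square algebra_simps)
  also have "k * (b - a) = pi"
    using \<open>a < b\<close> by (simp add: k_def)
  finally show ?thesis
    by (simp add: g_def)
qed

lemma sin_test_weight_ge:
  assumes "a < b"
  defines "k \<equiv> pi / (b - a)"
  shows "w0 / 2 - mean_dev w w0 a b \<le> (LINT x:{a..b}|lebesgue. w x * (sin (k * (x - a)))\<^sup>2) / (b - a)"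
proof -
  define u where "u x = sin (k * (x - a))" for x
  have u2: "(LINT x:{a..b}|lebesgue. (u x)\<^sup>2) = (b - a) / 2"
    unfolding u_def k_def by (rule set_integral_sin_test_function(1)[OF \<open>a < b\<close>])
  have u2_int: "set_integrable lebesgue {a..b} (\<lambda>x. (u x)\<^sup>2)"
    unfolding u_def by (intro absolutely_integrable_continuous_real continuous_intros)
  have "(u x)\<^sup>2 \<le> 1" for x
    by (simp add: u_def abs_square_le_1)
  then have "\<bar>(LINT x:{a..b}|lebesgue. w x * (u x)\<^sup>2) - w0 * ((b - a) / 2)\<bar>
      \<le> 1 * ((b - a) * mean_dev w w0 a b)"
    using set_integral_weighted_deviation[OF set_integrable_coefficient_mult(3)[OF u2_int] u2_int
        set_integrable_abs_diff_const[OF set_integrable_coefficient(2)], where c = w0 and H = 1] \<open>a < b\<close>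
    by (simp add: u2 set_integral_abs_diff_eq_mean_dev)
  then show ?thesis
    using \<open>a < b\<close> by (simp add: u_def field_simps abs_le_iff)
qed

lemma rayleigh_sin_scaled_le:
  assumes "a < b" and small: "mean_dev w w0 a b < w0 / 2"
  defines "k \<equiv> pi / (b - a)"
  shows "rayleigh p q w a b (\<lambda>x. sin (k * (x - a))) (\<lambda>x. k * cos (k * (x - a))) * (b - a)\<^sup>2
    \<le> (p0 * pi\<^sup>2 / 2 + pi\<^sup>2 * mean_dev p p0 a b + \<beta> * (b - a)\<^sup>2) / (w0 / 2 - mean_dev w w0 a b)"
proof -
  define P where "P = (LINT x:{a..b}|lebesgue. p x * (k * cos (k * (x - a)))\<^sup>2)"
  define Q where "Q = (LINT x:{a..b}|lebesgue. q x * (sin (k * (x - a)))\<^sup>2)"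
  define W where "W = (LINT x:{a..b}|lebesgue. w x * (sin (k * (x - a)))\<^sup>2)"
  have P: "P * (b - a) \<le> p0 * pi\<^sup>2 / 2 + pi\<^sup>2 * mean_dev p p0 a b"
    unfolding P_def k_def by (rule sin_test_energy_le[OF \<open>a < b\<close>])
  have W: "w0 / 2 - mean_dev w w0 a b \<le> W / (b - a)"
    unfolding W_def k_def by (rule sin_test_weight_ge[OF \<open>a < b\<close>])
  have "Q \<le> (LINT x:{a..b}|lebesgue. \<beta>)"
    unfolding Q_def
  proof (rule set_integral_mono_AE)
    show "set_integrable lebesgue {a..b} (\<lambda>x. q x * (sin (k * (x - a)))\<^sup>2)"
      by (intro set_integrable_coefficient_mult(2) absolutely_integrable_continuous_real continuous_intros)
    show "AE x\<in>{a..b} in lebesgue. q x * (sin (k * (x - a)))\<^sup>2 \<le> \<beta>"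
      using q_bounds
    proof eventually_elim
      case (elim x)
      then have "q x * (sin (k * (x - a)))\<^sup>2 \<le> q x"
        by (intro mult_left_le) (auto simp: abs_square_le_1)
      with elim show ?case
        by linarith
    qed
  qed (rule absolutely_integrable_continuous_real, simp)
  then have Q: "Q * (b - a) \<le> \<beta> * (b - a)\<^sup>2"
    using \<open>a < b\<close> by (subst (asm) set_integral_const) (auto simp: power2_eq_square mult.commute)
  have "0 \<le> P" "0 \<le> Q"
    unfolding P_def Q_def by (intro set_integral_mult_square_nonneg coefficients_nonneg)+
  have "rayleigh p q w a b (\<lambda>x. sin (k * (x - a))) (\<lambda>x. k * cos (k * (x - a))) * (b - a)\<^sup>2
      = ((P + Q) * (b - a)) / (W / (b - a))"
    using \<open>a < b\<close> by (simp add: rayleigh_Icc P_def Q_def W_def power2_eq_square)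
  also have "\<dots> \<le> (p0 * pi\<^sup>2 / 2 + pi\<^sup>2 * mean_dev p p0 a b + \<beta> * (b - a)\<^sup>2) / (w0 / 2 - mean_dev w w0 a b)"
  proof (rule frac_le)
    have "0 \<le> (P + Q) * (b - a)"
      using \<open>0 \<le> P\<close> \<open>0 \<le> Q\<close> \<open>a < b\<close> by simp
    moreover show "(P + Q) * (b - a) \<le> p0 * pi\<^sup>2 / 2 + pi\<^sup>2 * mean_dev p p0 a b + \<beta> * (b - a)\<^sup>2"
      using P Q by (simp add: distrib_right)
    ultimately show "0 \<le> p0 * pi\<^sup>2 / 2 + pi\<^sup>2 * mean_dev p p0 a b + \<beta> * (b - a)\<^sup>2"
      by linarith
  qed (use W small in auto)
  finally show ?thesis .
qed

lemma lambdaJ_scaled_le: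
  assumes "a < b" and "mean_dev w w0 a b < w0 / 2"
  shows "lambdaJ p q w a b * (b - a)\<^sup>2
    \<le> (p0 * pi\<^sup>2 / 2 + pi\<^sup>2 * mean_dev p p0 a b + \<beta> * (b - a)\<^sup>2) / (w0 / 2 - mean_dev w w0 a b)"
proof -
  define k where "k = pi / (b - a)"
  have "(a + b) / 2 \<in> {a<..<b}" "sin (k * ((a + b) / 2 - a)) \<noteq> 0"
    using sin_test_function_midpoint[OF \<open>a < b\<close>] \<open>a < b\<close> by (simp_all add: k_def)
  then have "lambdaJ p q w a b \<le> rayleigh p q w a b (\<lambda>x. sin (k * (x - a))) (\<lambda>x. k * cos (k * (x - a)))"
    using H10_sin[OF \<open>a < b\<close>, folded k_def] by (intro lambdaJ_le_rayleigh bexI[of _ "(a + b) / 2"]) auto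
  then have "lambdaJ p q w a b * (b - a)\<^sup>2
      \<le> rayleigh p q w a b (\<lambda>x. sin (k * (x - a))) (\<lambda>x. k * cos (k * (x - a))) * (b - a)\<^sup>2"
    by (rule mult_right_mono) simp
  also have "\<dots> \<le> (p0 * pi\<^sup>2 / 2 + pi\<^sup>2 * mean_dev p p0 a b + \<beta> * (b - a)\<^sup>2) / (w0 / 2 - mean_dev w w0 a b)"
    unfolding k_def by (rule rayleigh_sin_scaled_le[OF assms])
  finally show ?thesis .
qed

lemma lebesgue_point_coefficients_pos:
  assumes "lebesgue_point p x0" "lebesgue_point w x0"
  shows "0 < p x0" "0 < w x0"
proof -
  have "0 < 1 / \<beta>"
    using beta_pos by simp
  then show "0 < p x0" "0 < w x0"
    using lebesgue_point_bounds[OF assms(1) set_integrable_coefficient(1) p_bounds]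
      lebesgue_point_bounds[OF assms(2) set_integrable_coefficient(2) w_bounds]
    by linarith+
qed

lemma eventually_lambdaJ_scaled_less:
  assumes lp: "lebesgue_point p x0" "lebesgue_point w x0" and "p x0 * pi\<^sup>2 / w x0 < y"
  shows "eventually (\<lambda>J. lambdaJ p q w (fst J) (snd J) * (snd J - fst J)\<^sup>2 < y) (intervals_at x0)"
proof -
  define p0 where "p0 = p x0"
  define w0 where "w0 = w x0"
  have "0 < w0"
    using lebesgue_point_coefficients_pos[OF lp] by (simp add: w0_def)
  note dev_p = lebesgue_point_mean_dev_tendsto[OF lp(1) set_integrable_coefficient(1), folded p0_def]
  note dev_w = lebesgue_point_mean_dev_tendsto[OF lp(2) set_integrable_coefficient(2), folded w0_def]
  have "((\<lambda>J. (p0 * pi\<^sup>2 / 2 + pi\<^sup>2 * mean_dev p p0 (fst J) (snd J) + \<beta> * (snd J - fst J)\<^sup>2)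
      / (w0 / 2 - mean_dev w w0 (fst J) (snd J)))
      \<longlongrightarrow> (p0 * pi\<^sup>2 / 2 + pi\<^sup>2 * 0 + \<beta> * 0\<^sup>2) / (w0 / 2 - 0)) (intervals_at x0)"
    using \<open>0 < w0\<close> by (intro tendsto_intros dev_p dev_w tendsto_length_intervals_at) auto
  moreover have "(p0 * pi\<^sup>2 / 2 + pi\<^sup>2 * 0 + \<beta> * 0\<^sup>2) / (w0 / 2 - 0) < y"
    using assms(3) by (simp add: p0_def w0_def)
  ultimately have "eventually (\<lambda>J. (p0 * pi\<^sup>2 / 2 + pi\<^sup>2 * mean_dev p p0 (fst J) (snd J) + \<beta> * (snd J - fst J)\<^sup>2)
      / (w0 / 2 - mean_dev w w0 (fst J) (snd J)) < y) (intervals_at x0)"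
    by (rule order_tendstoD(2))
  moreover have "eventually (\<lambda>J. mean_dev w w0 (fst J) (snd J) < w0 / 2) (intervals_at x0)"
    using \<open>0 < w0\<close> by (intro order_tendstoD(2)[OF dev_w]) simp
  ultimately show ?thesis
    using eventually_nondegenerate_intervals_at
  proof eventually_elim
    case (elim J)
    then show ?case
      using lambdaJ_scaled_le[of "fst J" "snd J" w0 p0] by linarith
  qed
qed

lemma eventually_lambdaJ_scaled_greater:
  assumes lp: "lebesgue_point p x0" "lebesgue_point w x0" and "y < p x0 * pi\<^sup>2 / w x0"
  shows "eventually (\<lambda>J. y < lambdaJ p q w (fst J) (snd J) * (snd J - fst J)\<^sup>2) (intervals_at x0)"
proof -
  define p0 where "p0 = p x0"
  define w0 where "w0 = w x0"
  have "0 < p0" "0 < w0"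
    using lebesgue_point_coefficients_pos[OF lp] by (simp_all add: p0_def w0_def)
  note dev_p = lebesgue_point_mean_dev_tendsto[OF lp(1) set_integrable_coefficient(1), folded p0_def]
  note dev_w = lebesgue_point_mean_dev_tendsto[OF lp(2) set_integrable_coefficient(2), folded w0_def]
  have "((\<lambda>\<theta>. p0 * pi\<^sup>2 / (w0 * (1 + 2 * \<theta>)\<^sup>2)) \<longlongrightarrow> p0 * pi\<^sup>2 / (w0 * (1 + 2 * 0)\<^sup>2)) (at_right 0)"
    using \<open>0 < w0\<close> by (intro tendsto_intros) auto
  then have "eventually (\<lambda>\<theta>. 0 < \<theta> \<and> y < p0 * pi\<^sup>2 / (w0 * (1 + 2 * \<theta>)\<^sup>2)) (at_right 0)"
    using assms(3)
    by (intro eventually_conj eventually_at_right_less order_tendstoD(1)) (auto simp: p0_def w0_def)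
  then obtain \<theta> where "0 < \<theta>" and "y < p0 * pi\<^sup>2 / (w0 * (1 + 2 * \<theta>)\<^sup>2)"
    using eventually_happens'[of "at_right (0::real)"] by auto
  define \<sigma> where "\<sigma> = sin (pi * \<theta> / (1 + 2 * \<theta>))"
  have "0 < \<sigma>"
    unfolding \<sigma>_def using \<open>0 < \<theta>\<close> by (rule sin_enlarged_margin_pos)
  have "((\<lambda>J. 1 / (w0 * (1 + 2 * \<theta>)\<^sup>2 / (p0 * pi\<^sup>2) + w0 * \<beta>\<^sup>2 * mean_dev p p0 (fst J) (snd J) / \<sigma>\<^sup>2
      + \<beta> * mean_dev w w0 (fst J) (snd J)))
      \<longlongrightarrow> 1 / (w0 * (1 + 2 * \<theta>)\<^sup>2 / (p0 * pi\<^sup>2) + w0 * \<beta>\<^sup>2 * 0 / \<sigma>\<^sup>2 + \<beta> * 0)) (intervals_at x0)"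
    using \<open>0 < w0\<close> \<open>0 < p0\<close> \<open>0 < \<theta>\<close> \<open>0 < \<sigma>\<close> by (intro tendsto_intros dev_p dev_w) auto
  then have "eventually (\<lambda>J. y < 1 / (w0 * (1 + 2 * \<theta>)\<^sup>2 / (p0 * pi\<^sup>2)
      + w0 * \<beta>\<^sup>2 * mean_dev p p0 (fst J) (snd J) / \<sigma>\<^sup>2 + \<beta> * mean_dev w w0 (fst J) (snd J))) (intervals_at x0)"
    using \<open>y < p0 * pi\<^sup>2 / (w0 * (1 + 2 * \<theta>)\<^sup>2)\<close> by (intro order_tendstoD(1)) auto
  then show ?thesis
    using eventually_nondegenerate_intervals_at
  proof eventually_elim
    case (elim J)
    then show ?case
      using lambdaJ_scaled_ge[OF _ \<open>0 < \<theta>\<close> \<open>0 < p0\<close> \<open>0 < w0\<close>, of "fst J" "snd J"]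
      unfolding \<sigma>_def by linarith
  qed
qed

lemma lambdaJ_scaled_tendsto:
  assumes "lebesgue_point p x0" "lebesgue_point w x0"
  shows "((\<lambda>J. lambdaJ p q w (fst J) (snd J) * (snd J - fst J)\<^sup>2) \<longlongrightarrow> p x0 * pi\<^sup>2 / w x0) (intervals_at x0)"
  using eventually_lambdaJ_scaled_greater[OF assms] eventually_lambdaJ_scaled_less[OF assms]
  by (rule order_tendstoI)

end

theorem lemma2p1:
  fixes \<beta> :: real and p q w :: "real \<Rightarrow> real" and x0 :: real
  assumes "1 < \<beta>"
    and "p \<in> borel_measurable lebesgue" and "q \<in> borel_measurable lebesgue"
    and "w \<in> borel_measurable lebesgue"
    and "AE x in lebesgue. 0 \<le> q x \<and> q x \<le> \<beta>"
    and "AE x in lebesgue. 1 / \<beta> \<le> p x \<and> p x \<le> \<beta>"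
    and "AE x in lebesgue. 1 / \<beta> \<le> w x \<and> w x \<le> \<beta>"
    and "lebesgue_point p x0" and "lebesgue_point w x0"
  shows "let s = (\<lambda>x. sqrt (w x / p x)) in
         \<forall>\<epsilon>>0. \<exists>\<delta>>0. \<forall>a b. a < b \<and> a \<le> x0 \<and> x0 \<le> b \<and> b - a < \<delta> \<longrightarrow>
           \<bar>lambdaJ p q w a b * (measure lebesgue {a<..<b})\<^sup>2 - pi\<^sup>2 / (s x0)\<^sup>2\<bar> < \<epsilon>"
proof -
  interpret sturm_liouville \<beta> p q w
    using assms(1-7) by unfold_locales auto
  have "0 < p x0" "0 < w x0"
    by (rule lebesgue_point_coefficients_pos[OF assms(8,9)])+
  then have "pi\<^sup>2 / (sqrt (w x0 / p x0))\<^sup>2 = p x0 * pi\<^sup>2 / w x0"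
    by simp
  with tendsto_intervals_atD[OF lambdaJ_scaled_tendsto[OF assms(8,9)]] show ?thesis
    by (simp add: Let_def)
qed

end
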